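(* Let $\alpha,\beta,\gamma\in\Bbbk^n$ with $\beta_i\neq0$ for all $i\in Q_0$. Then $\mathcal H(\alpha,\beta,\gamma)$ is a piecewise domain with respect to the idempotents $e_0,\dots,e_{n-1}$.
   Context: $\Bbbk$ is an algebraically closed field of characteristic zero. Fix $n\ge1$; indices mod $n$, $Q_0=\{0,\dots,n-1\}$. $Q$ is the quiver with vertices $Q_0$ and arrows $u_i:i\to i+1$, $d_i:i+1\to i$; paths are written left to right, $e_i$ is the trivial path at $i$. For $\alpha,\beta,\gamma\in\Bbbk^n$, $\mathcal H(\alpha,\beta,\gamma)$ is $\Bbbk Q$ modulo the relations $d_{i-1}u_{i-1}u_i=\alpha_iu_id_iu_i+\beta_iu_iu_{i+1}d_{i+1}+\gamma_iu_i$ and $d_id_{i-1}u_{i-1}=\alpha_id_iu_id_i+\beta_iu_{i+1}d_{i+1}d_i+\gamma_id_i$ for all $i\in Q_0$. A ring $S$ with complete set of orthogonal idempotents $e_0,\dots,e_{n-1}$ is a piecewise domain if $ab=0$ implies $a=0$ or $b=0$ whenever $a\in e_iSe_k$, $b\in e_kSe_j$. *)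

theory Defs
  imports "HOL-Computational_Algebra.Polynomial"
begin

text \<open>The quiver Q: vertices 0..n-1, arrows U i : i -> i+1, D i : i+1 -> i (indices mod n).\<close>
datatype arr = U nat | D nat

fun arr_idx :: "arr \<Rightarrow> nat" where
  "arr_idx (U i) = i" | "arr_idx (D i) = i"

fun arr_src :: "nat \<Rightarrow> arr \<Rightarrow> nat" where
  "arr_src n (U i) = i" | "arr_src n (D i) = (i + 1) mod n"

fun arr_tgt :: "nat \<Rightarrow> arr \<Rightarrow> nat" where
  "arr_tgt n (U i) = (i + 1) mod n" | "arr_tgt n (D i) = i"

text \<open>A path is a start vertex with a list of arrows, composed left to right;
  (v, []) is the trivial path e_v.\<close>
type_synonym path = "nat \<times> arr list"

fun valid_from :: "nat \<Rightarrow> nat \<Rightarrow> arr list \<Rightarrow> bool" where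
  "valid_from n v [] = True"
| "valid_from n v (a # as) = (arr_idx a < n \<and> arr_src n a = v \<and> valid_from n (arr_tgt n a) as)"

fun path_tgt :: "nat \<Rightarrow> nat \<Rightarrow> arr list \<Rightarrow> nat" where
  "path_tgt n v [] = v"
| "path_tgt n v (a # as) = path_tgt n (arr_tgt n a) as"

definition path_ok :: "nat \<Rightarrow> path \<Rightarrow> bool" where
  "path_ok n p = (fst p < n \<and> valid_from n (fst p) (snd p))"

definition pathalg :: "nat \<Rightarrow> (path \<Rightarrow> 'k::field) set" where
  "pathalg n = {x. finite {p. x p \<noteq> 0} \<and> (\<forall>p. x p \<noteq> 0 \<longrightarrow> path_ok n p)}"

definition pth :: "path \<Rightarrow> path \<Rightarrow> 'k::field" where
  "pth p = (\<lambda>q. if q = p then 1 else 0)"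

text \<open>Multiplication in kQ (concatenation of paths, zero if not composable).\<close>
definition pmult :: "nat \<Rightarrow> (path \<Rightarrow> 'k::field) \<Rightarrow> (path \<Rightarrow> 'k) \<Rightarrow> path \<Rightarrow> 'k" where
  "pmult n x y = (\<lambda>(v, cs). \<Sum>k\<in>{0..length cs}.
      x (v, take k cs) * y (path_tgt n v (take k cs), drop k cs))"

definition mdec :: "nat \<Rightarrow> nat \<Rightarrow> nat" where "mdec n i = (i + n - 1) mod n"
definition minc :: "nat \<Rightarrow> nat \<Rightarrow> nat" where "minc n i = (i + 1) mod n"

definition rel1 :: "nat \<Rightarrow> (nat \<Rightarrow> 'k::field) \<Rightarrow> (nat \<Rightarrow> 'k) \<Rightarrow> (nat \<Rightarrow> 'k) \<Rightarrow> nat \<Rightarrow> path \<Rightarrow> 'k" where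
  "rel1 n \<alpha> \<beta> \<gamma> i = (\<lambda>p.
      pth (i, [D (mdec n i), U (mdec n i), U i]) p
    - \<alpha> i * pth (i, [U i, D i, U i]) p
    - \<beta> i * pth (i, [U i, U (minc n i), D (minc n i)]) p
    - \<gamma> i * pth (i, [U i]) p)"

definition rel2 :: "nat \<Rightarrow> (nat \<Rightarrow> 'k::field) \<Rightarrow> (nat \<Rightarrow> 'k) \<Rightarrow> (nat \<Rightarrow> 'k) \<Rightarrow> nat \<Rightarrow> path \<Rightarrow> 'k" where
  "rel2 n \<alpha> \<beta> \<gamma> i = (\<lambda>p.
      pth (minc n i, [D i, D (mdec n i), U (mdec n i)]) p
    - \<alpha> i * pth (minc n i, [D i, U i, D i]) p
    - \<beta> i * pth (minc n i, [U (minc n i), D (minc n i), D i]) p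
    - \<gamma> i * pth (minc n i, [D i]) p)"

inductive_set relideal :: "nat \<Rightarrow> (nat \<Rightarrow> 'k::field) \<Rightarrow> (nat \<Rightarrow> 'k) \<Rightarrow> (nat \<Rightarrow> 'k) \<Rightarrow> (path \<Rightarrow> 'k) set"
  for n \<alpha> \<beta> \<gamma> where
  zero: "(\<lambda>_. 0) \<in> relideal n \<alpha> \<beta> \<gamma>"
| step: "\<lbrakk>x \<in> relideal n \<alpha> \<beta> \<gamma>; i < n; path_ok n p; path_ok n q;
          r = rel1 n \<alpha> \<beta> \<gamma> i \<or> r = rel2 n \<alpha> \<beta> \<gamma> i\<rbrakk>
         \<Longrightarrow> (\<lambda>t. x t + c * pmult n (pmult n (pth p) r) (pth q) t) \<in> relideal n \<alpha> \<beta> \<gamma>"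

definition corner :: "nat \<Rightarrow> nat \<Rightarrow> nat \<Rightarrow> (path \<Rightarrow> 'k::field) set" where
  "corner n i k = {x \<in> pathalg n. \<forall>p. x p \<noteq> 0 \<longrightarrow> fst p = i \<and> path_tgt n (fst p) (snd p) = k}"

text \<open>H(alpha,beta,gamma) = kQ / relideal is a piecewise domain w.r.t. e_0..e_{n-1}:
  for a in e_i H e_k, b in e_k H e_j, ab = 0 implies a = 0 or b = 0.
  Written on representatives in kQ (every element of e_i H e_k lifts to corner n i k).\<close>
definition piecewise_domain_H :: "nat \<Rightarrow> (nat \<Rightarrow> 'k::field) \<Rightarrow> (nat \<Rightarrow> 'k) \<Rightarrow> (nat \<Rightarrow> 'k) \<Rightarrow> bool" where
  "piecewise_domain_H n \<alpha> \<beta> \<gamma> = (\<forall>i<n. \<forall>k<n. \<forall>j<n. \<forall>a \<in> corner n i k. \<forall>b \<in> corner n k j.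
      pmult n a b \<in> relideal n \<alpha> \<beta> \<gamma> \<longrightarrow> a \<in> relideal n \<alpha> \<beta> \<gamma> \<or> b \<in> relideal n \<alpha> \<beta> \<gamma>)"

end

theory Submission
  imports Defs "HOL-Library.Function_Algebras"
begin

text \<open>Send a path \<open>w\<close> to \<open>\<phi>(w) t\<^bsup>deg w\<^esup>\<close> in a skew Laurent polynomial ring over \<open>k[X,Y]\<close>:
  the arrow \<open>d\<^sub>j\<close> becomes \<open>t\<close>, twisting by the automorphism \<open>\<sigma>\<^sub>j : X \<mapsto> Y,
  Y \<mapsto> \<alpha>\<^sub>j Y + \<beta>\<^sub>j X + \<gamma>\<^sub>j\<close> (invertible because \<open>\<beta>\<^sub>j \<noteq> 0\<close>), and \<open>u\<^sub>j\<close> becomes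
  \<open>X t\<^sup>-\<^sup>1\<close>. This kills the relations, and on corners \<open>e\<^sub>i kQ e\<^sub>k\<close> it is multiplicative
  for the twisted product, so comparing leading terms in \<open>t\<close> shows that images of nonzero
  elements have nonzero product. The representation is faithful on \<open>e\<^sub>i H\<close>: modulo the
  relations every element of \<open>e\<^sub>i kQ\<close> is a normal form \<open>\<Sum> f\<^sub>m(x,y) d\<^sup>m + \<Sum> g\<^sub>m(x,y) u\<^sup>m\<close>
  with commuting loops \<open>x = u\<^sub>i d\<^sub>i\<close>, \<open>y = d\<^sub>i\<^sub>-\<^sub>1 u\<^sub>i\<^sub>-\<^sub>1\<close>, and such a normal form is
  recovered from its image.\<close>

section \<open>The path algebra\<close>

lemma path_tgt_append: "path_tgt n v (xs @ ys) = path_tgt n (path_tgt n v xs) ys"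
  by (induction xs arbitrary: v) auto

lemma valid_from_append:
  "valid_from n v (xs @ ys) \<longleftrightarrow> valid_from n v xs \<and> valid_from n (path_tgt n v xs) ys"
  by (induction xs arbitrary: v) auto

lemma path_tgt_less: "v < n \<Longrightarrow> valid_from n v cs \<Longrightarrow> path_tgt n v cs < n"
proof (induction cs arbitrary: v)
  case (Cons a cs)
  then show ?case by (cases a) auto
qed simp

lemma path_ok_append:
  "path_ok n p \<Longrightarrow> path_ok n q \<Longrightarrow> fst q = path_tgt n (fst p) (snd p) \<Longrightarrow> path_ok n (fst p, snd p @ snd q)"
  by (auto simp: path_ok_def valid_from_append)

text \<open>Induction rules instantiated at function-valued goals may leave \<open>\<lambda>_. 0\<close> where \<open>0\<close> was meant.\<close>
lemma lambda_zero_eq_zero: "(\<lambda>_. 0) = (0 :: 'a \<Rightarrow> 'b::zero)"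
  by (simp add: zero_fun_def)

lemma sum_fun_apply [simp]: "sum f A t = (\<Sum>a\<in>A. f a t)"
  by (induction A rule: infinite_finite_induct) auto

lemma pmult_pth_pth:
  "pmult n (pth p) (pth q) = (if fst q = path_tgt n (fst p) (snd p) then pth (fst p, snd p @ snd q) else 0)"
proof
  fix t :: path
  obtain v cs where t: "t = (v, cs)" by fastforce
  obtain a as where p: "p = (a, as)" by fastforce
  obtain b bs where q: "q = (b, bs)" by fastforce
  define c :: 'a where "c = (if v = a \<and> take (length as) cs = as \<and> path_tgt n v as = b
    \<and> drop (length as) cs = bs then 1 else 0)"
  have summand: "pth p (v, take k cs) * pth q (path_tgt n v (take k cs), drop k cs)
      = (if k = length as then c else 0)" if "k \<le> length cs" for k
    using that by (cases "k = length as") (auto simp: pth_def c_def p q)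
  have "pmult n (pth p) (pth q) t = (\<Sum>k\<in>{0..length cs}. if k = length as then c else 0)"
    unfolding pmult_def t by (simp add: summand)
  also have "\<dots> = (if length as \<le> length cs then c else 0)"
    by (simp add: sum.delta')
  also have "\<dots> = (if fst q = path_tgt n (fst p) (snd p) then pth (fst p, snd p @ snd q) else 0) t"
    unfolding t p q pth_def c_def by (auto, metis append_take_drop_id)
  finally show "pmult n (pth p) (pth q) t = \<dots>" .
qed

lemma pmult_pth_pth_eq: "path_tgt n v w = u \<Longrightarrow> pmult n (pth (v, w)) (pth (u, w')) = pth (v, w @ w')"
  by (simp add: pmult_pth_pth)

lemma pmult_assoc: "pmult n (pmult n x y) z = pmult n x (pmult n y z)"
proof
  fix t :: path
  obtain v cs where t: "t = (v, cs)" by fastforce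
  define L where "L = length cs"
  define g where "g j k = x (v, take j cs) * y (path_tgt n v (take j cs), take (k - j) (drop j cs))
        * z (path_tgt n v (take k cs), drop k cs)" for j k
  have "pmult n (pmult n x y) z t = (\<Sum>k\<in>{0..L}. \<Sum>j\<in>{0..k}. g j k)"
    unfolding pmult_def t L_def g_def by (simp add: sum_distrib_right take_drop)
  also have "\<dots> = (\<Sum>(j, i)\<in>{(j, i). j + i \<le> L}. g j (j + i))"
    using sum.triangle_reindex_eq[of "\<lambda>j i. g j (j + i)" L] by (simp add: atLeast0AtMost)
  also have "\<dots> = (\<Sum>j\<in>{0..L}. \<Sum>i\<in>{0..L - j}. g j (j + i))"
  proof -
    have "{(j, i). j + i \<le> L} = Sigma {0..L} (\<lambda>j. {0..L - j})" by auto
    then show ?thesis by (simp add: sum.Sigma)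
  qed
  also have "\<dots> = pmult n x (pmult n y z) t"
    unfolding pmult_def t L_def g_def
    by (auto simp: sum_distrib_left path_tgt_append[symmetric] take_add drop_drop add.commute
        mult.assoc intro!: sum.cong)
  finally show "pmult n (pmult n x y) z t = pmult n x (pmult n y z) t" .
qed

definition psmult :: "'k::field \<Rightarrow> (path \<Rightarrow> 'k) \<Rightarrow> path \<Rightarrow> 'k" where
  "psmult c x = (\<lambda>t. c * x t)"

lemma psmult_apply [simp]: "psmult c x t = c * x t"
  by (simp add: psmult_def)

lemma psmult_add: "psmult c (x + y) = psmult c x + psmult c y"
  by (rule ext) (simp add: distrib_left)

lemma psmult_diff: "psmult c (x - y) = psmult c x - psmult c y"
  by (rule ext) (simp add: right_diff_distrib)

lemma psmult_psmult: "psmult c (psmult d x) = psmult (c * d) x"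
  by (rule ext) simp

lemma psmult_zero [simp]: "psmult c 0 = 0" "psmult 0 x = 0"
  by (rule ext, simp)+

lemma psmult_one [simp]: "psmult 1 x = x"
  by (rule ext) simp

lemma psmult_sum: "psmult c (sum f J) = (\<Sum>j\<in>J. psmult c (f j))"
  by (rule ext) (simp add: sum_distrib_left)

lemma pmult_add_left: "pmult n (x + y) z = pmult n x z + pmult n y z"
  by (rule ext) (simp add: pmult_def split_beta distrib_right sum.distrib)

lemma pmult_add_right: "pmult n z (x + y) = pmult n z x + pmult n z y"
  by (rule ext) (simp add: pmult_def split_beta distrib_left sum.distrib)

lemma pmult_diff_left: "pmult n (x - y) z = pmult n x z - pmult n y z"
  by (rule ext) (simp add: pmult_def split_beta left_diff_distrib sum_subtractf)

lemma pmult_diff_right: "pmult n z (x - y) = pmult n z x - pmult n z y"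
  by (rule ext) (simp add: pmult_def split_beta right_diff_distrib sum_subtractf)

lemma pmult_psmult_left: "pmult n (psmult c x) z = psmult c (pmult n x z)"
  by (rule ext) (simp add: pmult_def split_beta sum_distrib_left mult.assoc)

lemma pmult_psmult_right: "pmult n z (psmult c x) = psmult c (pmult n z x)"
  by (rule ext) (simp add: pmult_def split_beta sum_distrib_left mult.left_commute)

lemma pmult_zero [simp]: "pmult n 0 z = 0" "pmult n z 0 = 0"
  by (rule ext, simp add: pmult_def split_beta)+

lemma pmult_sum_left: "pmult n (sum f J) z = (\<Sum>j\<in>J. pmult n (f j) z)"
  by (rule ext) (simp add: pmult_def split_beta sum_distrib_right flip: sum.swap[of _ J])

lemma pmult_sum_right: "pmult n z (sum f J) = (\<Sum>j\<in>J. pmult n z (f j))"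
  by (rule ext) (simp add: pmult_def split_beta sum_distrib_left flip: sum.swap[of _ J])

lemma pmult_pth_pth_pth:
  "pmult n (pmult n (pth p) (pth s)) (pth q) =
    (if fst s = path_tgt n (fst p) (snd p) \<and> fst q = path_tgt n (fst s) (snd s)
     then pth (fst p, snd p @ snd s @ snd q) else 0)"
  by (auto simp: pmult_pth_pth path_tgt_append)

definition fin_supp :: "(path \<Rightarrow> 'k::field) \<Rightarrow> bool" where
  "fin_supp x \<longleftrightarrow> finite {p. x p \<noteq> 0}"

lemma fin_supp_pth [simp]: "fin_supp (pth p)"
  by (simp add: fin_supp_def pth_def)

lemma fin_supp_zero [simp]: "fin_supp 0"
  by (simp add: fin_supp_def)

lemma fin_supp_add: "fin_supp x \<Longrightarrow> fin_supp y \<Longrightarrow> fin_supp (x + y)"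
  unfolding fin_supp_def by (rule finite_subset[of _ "{p. x p \<noteq> 0} \<union> {p. y p \<noteq> 0}"]) auto

lemma fin_supp_diff: "fin_supp x \<Longrightarrow> fin_supp y \<Longrightarrow> fin_supp (x - y)"
  unfolding fin_supp_def by (rule finite_subset[of _ "{p. x p \<noteq> 0} \<union> {p. y p \<noteq> 0}"]) auto

lemma fin_supp_psmult: "fin_supp x \<Longrightarrow> fin_supp (psmult c x)"
  unfolding fin_supp_def by (rule finite_subset[of _ "{p. x p \<noteq> 0}"]) auto

lemma fin_supp_sum: "(\<And>j. j \<in> J \<Longrightarrow> fin_supp (f j)) \<Longrightarrow> fin_supp (sum f J)"
  by (induction J rule: infinite_finite_induct) (simp_all add: fin_supp_add del: plus_fun_apply sum_fun_apply)

lemma fin_supp_pmult: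
  assumes "fin_supp x" "fin_supp y"
  shows "fin_supp (pmult n x y)"
proof -
  have "{t. pmult n x y t \<noteq> 0} \<subseteq> (\<lambda>(p, q). (fst p, snd p @ snd q)) ` ({p. x p \<noteq> 0} \<times> {p. y p \<noteq> 0})"
  proof
    fix t assume "t \<in> {t. pmult n x y t \<noteq> 0}"
    then obtain v cs where t: "t = (v, cs)" and "pmult n x y (v, cs) \<noteq> 0" by (cases t) auto
    then obtain k where "x (v, take k cs) * y (path_tgt n v (take k cs), drop k cs) \<noteq> 0"
      unfolding pmult_def by (auto elim: sum.not_neutral_contains_not_neutral)
    then show "t \<in> (\<lambda>(p, q). (fst p, snd p @ snd q)) ` ({p. x p \<noteq> 0} \<times> {p. y p \<noteq> 0})"
      unfolding t by (intro image_eqI[of _ _ "((v, take k cs), (path_tgt n v (take k cs), drop k cs))"]) auto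
  qed
  then show ?thesis
    using assms unfolding fin_supp_def by (meson finite_SigmaI finite_imageI finite_subset)
qed

lemma fin_supp_expand:
  assumes "fin_supp x"
  shows "x = (\<Sum>p | x p \<noteq> 0. psmult (x p) (pth p))"
proof
  fix t
  have "(\<Sum>p | x p \<noteq> 0. psmult (x p) (pth p)) t = (\<Sum>p | x p \<noteq> 0. if t = p then x t else 0)"
    by (auto simp: pth_def intro: sum.cong)
  also have "\<dots> = x t"
    using assms by (simp add: fin_supp_def sum.delta)
  finally show "x t = (\<Sum>p | x p \<noteq> 0. psmult (x p) (pth p)) t" by simp
qed

lemma pathalg_fin_supp: "x \<in> pathalg n \<Longrightarrow> fin_supp x"
  by (simp add: pathalg_def fin_supp_def)

lemmas pathalg_expand = fin_supp_expand[OF pathalg_fin_supp]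

lemma pathalg_path_ok: "y \<in> pathalg n \<Longrightarrow> y p \<noteq> 0 \<Longrightarrow> path_ok n p"
  unfolding pathalg_def by blast

lemma pth_in_pathalg: "path_ok n p \<Longrightarrow> pth p \<in> pathalg n"
  by (auto simp: pathalg_def pth_def)

lemma pathalg_iff: "x \<in> pathalg n \<longleftrightarrow> fin_supp x \<and> (\<forall>p. x p \<noteq> 0 \<longrightarrow> path_ok n p)"
  by (simp add: pathalg_def fin_supp_def)

lemma pathalg_add:
  assumes "x \<in> pathalg n" "y \<in> pathalg n"
  shows "x + y \<in> pathalg n"
proof -
  have "x p \<noteq> 0 \<or> y p \<noteq> 0" if "(x + y) p \<noteq> 0" for p
    using that by auto
  with assms show ?thesis
    unfolding pathalg_iff by (metis fin_supp_add)
qed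

lemma pathalg_psmult: "x \<in> pathalg n \<Longrightarrow> psmult c x \<in> pathalg n"
  unfolding pathalg_def by (auto intro: finite_subset[of _ "{p. x p \<noteq> 0}"])

lemma pathalg_sum: "(\<And>j. j \<in> J \<Longrightarrow> f j \<in> pathalg n) \<Longrightarrow> sum f J \<in> pathalg n"
proof (induction J rule: infinite_finite_induct)
  case (insert j J)
  then show ?case by (simp add: pathalg_add del: sum_fun_apply plus_fun_apply)
qed (simp_all add: pathalg_def)

lemma corner_iff:
  "x \<in> corner n i k \<longleftrightarrow> fin_supp x \<and> (\<forall>p. x p \<noteq> 0 \<longrightarrow> path_ok n p \<and> fst p = i \<and> path_tgt n i (snd p) = k)"
  by (auto simp: corner_def pathalg_def fin_supp_def)

lemma corner_fin_supp: "a \<in> corner n i k \<Longrightarrow> fin_supp a"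
  by (auto simp: corner_def pathalg_fin_supp)

lemma corner_support:
  assumes "a \<in> corner n i k" "a p \<noteq> 0"
  shows "fst p = i" "path_tgt n i (snd p) = k" "valid_from n i (snd p)" "i < n"
  using assms by (cases p, auto simp: corner_def pathalg_def path_ok_def)+

lemma pth_in_corner: "i < n \<Longrightarrow> valid_from n i w \<Longrightarrow> path_tgt n i w = k \<Longrightarrow> pth (i, w) \<in> corner n i k"
  using fin_supp_pth[of "(i, w)"] by (auto simp: corner_iff path_ok_def pth_def)

lemma pmult_corner_eq_0:
  assumes "a \<in> corner n i k" "b \<in> corner n k' j" "k \<noteq> k'"
  shows "pmult n a b = 0"
proof
  fix t :: path
  have "a (v, take m cs) * b (path_tgt n v (take m cs), drop m cs) = 0" for v cs m
  proof (rule ccontr)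
    assume "a (v, take m cs) * b (path_tgt n v (take m cs), drop m cs) \<noteq> 0"
    then have "path_tgt n v (take m cs) = k" "path_tgt n v (take m cs) = k'"
      using assms(1,2) by (auto simp: corner_def)
    with assms(3) show False by simp
  qed
  then show "pmult n a b t = 0 t" by (cases t) (auto simp: pmult_def intro!: sum.neutral)
qed

lemma pmult_in_corner:
  assumes a: "a \<in> corner n i k" and b: "b \<in> corner n k j"
  shows "pmult n a b \<in> corner n i j"
proof -
  have "path_ok n t \<and> fst t = i \<and> path_tgt n (fst t) (snd t) = j" if "pmult n a b t \<noteq> 0" for t
  proof -
    obtain v cs where t: "t = (v, cs)" by fastforce
    from that t obtain m where "a (v, take m cs) * b (path_tgt n v (take m cs), drop m cs) \<noteq> 0"
      unfolding pmult_def by (auto elim: sum.not_neutral_contains_not_neutral)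
    then have a_nz: "a (v, take m cs) \<noteq> 0" and b_nz: "b (path_tgt n v (take m cs), drop m cs) \<noteq> 0"
      by auto
    have "a \<in> pathalg n" "b \<in> pathalg n"
      using a b by (simp_all add: corner_def)
    with a_nz b_nz have ok: "path_ok n (v, take m cs)" "path_ok n (path_tgt n v (take m cs), drop m cs)"
      by (simp_all add: pathalg_path_ok)
    have "v = i" "path_tgt n v (take m cs) = k" "path_tgt n k (drop m cs) = j"
      using corner_support[OF a a_nz] corner_support[OF b b_nz] by auto
    moreover have "path_tgt n v cs = path_tgt n (path_tgt n v (take m cs)) (drop m cs)"
      by (metis append_take_drop_id path_tgt_append)
    ultimately show ?thesis
      using path_ok_append[OF ok] by (simp add: t)
  qed
  moreover have "fin_supp (pmult n a b)"
    using a b by (intro fin_supp_pmult corner_fin_supp)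
  ultimately show ?thesis
    by (auto simp: corner_def pathalg_def fin_supp_def)
qed

lemma corner_diff:
  assumes "a \<in> corner n i k" "b \<in> corner n i k"
  shows "a - b \<in> corner n i k"
proof -
  have "a p \<noteq> 0 \<or> b p \<noteq> 0" if "(a - b) p \<noteq> 0" for p
    using that by auto
  with assms show ?thesis
    unfolding corner_iff by (metis fin_supp_diff)
qed

lemma corner_psmult: "a \<in> corner n i k \<Longrightarrow> psmult c a \<in> corner n i k"
  unfolding corner_iff by (auto simp: fin_supp_psmult)

section \<open>The ideal of relations\<close>

lemma relideal_induct [consumes 1, case_names zero step]:
  assumes "x \<in> relideal n \<alpha> \<beta> \<gamma>"
    and "P 0"
    and "\<And>x i p q r c. x \<in> relideal n \<alpha> \<beta> \<gamma> \<Longrightarrow> P x \<Longrightarrow> i < n \<Longrightarrow> path_ok n p \<Longrightarrow> path_ok n q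
      \<Longrightarrow> r = rel1 n \<alpha> \<beta> \<gamma> i \<or> r = rel2 n \<alpha> \<beta> \<gamma> i
      \<Longrightarrow> P (x + psmult c (pmult n (pmult n (pth p) r) (pth q)))"
  shows "P x"
  using assms(1)
proof induction
  case zero
  then show ?case using assms(2) by (simp add: zero_fun_def)
next
  case (step x i p q r c)
  then show ?case using assms(3)[of x i p q r c] by (simp add: plus_fun_def psmult_def)
qed

lemma relideal_zero [simp]: "0 \<in> relideal n \<alpha> \<beta> \<gamma>"
  using relideal.zero by (simp add: zero_fun_def)

lemma relideal_step:
  "x \<in> relideal n \<alpha> \<beta> \<gamma> \<Longrightarrow> i < n \<Longrightarrow> path_ok n p \<Longrightarrow> path_ok n q
    \<Longrightarrow> r = rel1 n \<alpha> \<beta> \<gamma> i \<or> r = rel2 n \<alpha> \<beta> \<gamma> i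
    \<Longrightarrow> x + psmult c (pmult n (pmult n (pth p) r) (pth q)) \<in> relideal n \<alpha> \<beta> \<gamma>"
  using relideal.step[of x n \<alpha> \<beta> \<gamma> i p q r c] by (simp add: plus_fun_def psmult_def)

lemma relideal_generator:
  "i < n \<Longrightarrow> path_ok n p \<Longrightarrow> path_ok n q \<Longrightarrow> r = rel1 n \<alpha> \<beta> \<gamma> i \<or> r = rel2 n \<alpha> \<beta> \<gamma> i
    \<Longrightarrow> pmult n (pmult n (pth p) r) (pth q) \<in> relideal n \<alpha> \<beta> \<gamma>"
  using relideal_step[OF relideal_zero, of i n p q r \<alpha> \<beta> \<gamma> 1] by simp

lemma relideal_add:
  assumes "x \<in> relideal n \<alpha> \<beta> \<gamma>" "y \<in> relideal n \<alpha> \<beta> \<gamma>"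
  shows "x + y \<in> relideal n \<alpha> \<beta> \<gamma>"
  using assms(2)
proof (induction rule: relideal_induct)
  case (step y i p q r c)
  then show ?case using relideal_step[OF step.IH step.hyps(2-5)] by (metis add.assoc)
qed (use assms(1) in simp)

lemma relideal_psmult:
  assumes "x \<in> relideal n \<alpha> \<beta> \<gamma>"
  shows "psmult c x \<in> relideal n \<alpha> \<beta> \<gamma>"
  using assms
proof (induction rule: relideal_induct)
  case (step x i p q r d)
  show ?case
    unfolding psmult_add psmult_psmult by (rule relideal_step[OF step.IH step.hyps(2-5)])
qed (simp add: lambda_zero_eq_zero)

lemma relideal_diff:
  assumes "x \<in> relideal n \<alpha> \<beta> \<gamma>" "y \<in> relideal n \<alpha> \<beta> \<gamma>"
  shows "x - y \<in> relideal n \<alpha> \<beta> \<gamma>"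
proof -
  have "x - y = x + psmult (- 1) y" by (rule ext) simp
  then show ?thesis using relideal_add[OF assms(1) relideal_psmult[OF assms(2)]] by metis
qed

lemma relideal_sum:
  "(\<And>j. j \<in> J \<Longrightarrow> f j \<in> relideal n \<alpha> \<beta> \<gamma>) \<Longrightarrow> sum f J \<in> relideal n \<alpha> \<beta> \<gamma>"
  by (induction J rule: infinite_finite_induct) (simp_all add: relideal_add)

lemma relideal_pmult_pth_right:
  assumes "x \<in> relideal n \<alpha> \<beta> \<gamma>" "path_ok n s"
  shows "pmult n x (pth s) \<in> relideal n \<alpha> \<beta> \<gamma>"
  using assms(1)
proof (induction rule: relideal_induct)
  case (step x i p q r c)
  have "pmult n (pmult n (pmult n (pth p) r) (pth q)) (pth s) \<in> relideal n \<alpha> \<beta> \<gamma>"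
  proof (cases "fst s = path_tgt n (fst q) (snd q)")
    case True
    then show ?thesis
      using relideal_generator[OF step.hyps(2,3) path_ok_append[OF step.hyps(4) assms(2)] step.hyps(5)]
      by (simp add: pmult_assoc pmult_pth_pth)
  qed (simp add: pmult_assoc pmult_pth_pth)
  then show ?case
    unfolding pmult_add_left pmult_psmult_left using relideal_add[OF step.IH relideal_psmult] by blast
qed (simp add: lambda_zero_eq_zero)

lemma relideal_pmult_pth_left:
  assumes "x \<in> relideal n \<alpha> \<beta> \<gamma>" "path_ok n s"
  shows "pmult n (pth s) x \<in> relideal n \<alpha> \<beta> \<gamma>"
  using assms(1)
proof (induction rule: relideal_induct)
  case (step x i p q r c)
  have "pmult n (pth s) (pmult n (pmult n (pth p) r) (pth q)) \<in> relideal n \<alpha> \<beta> \<gamma>"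
  proof (cases "fst p = path_tgt n (fst s) (snd s)")
    case True
    then show ?thesis
      using relideal_generator[OF step.hyps(2) path_ok_append[OF assms(2) step.hyps(3)] step.hyps(4,5)]
      by (simp add: pmult_assoc[symmetric] pmult_pth_pth)
  qed (simp add: pmult_assoc[symmetric] pmult_pth_pth)
  then show ?case
    unfolding pmult_add_right pmult_psmult_right using relideal_add[OF step.IH relideal_psmult] by blast
qed (simp add: lambda_zero_eq_zero)

lemma relideal_pmult_right:
  assumes "x \<in> relideal n \<alpha> \<beta> \<gamma>" "y \<in> pathalg n"
  shows "pmult n x y \<in> relideal n \<alpha> \<beta> \<gamma>"
  by (subst pathalg_expand[OF assms(2)], unfold pmult_sum_right pmult_psmult_right)
    (auto intro!: relideal_sum relideal_psmult relideal_pmult_pth_right[OF assms(1)] pathalg_path_ok[OF assms(2)])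

lemma relideal_pmult_left:
  assumes "x \<in> relideal n \<alpha> \<beta> \<gamma>" "y \<in> pathalg n"
  shows "pmult n y x \<in> relideal n \<alpha> \<beta> \<gamma>"
  by (subst pathalg_expand[OF assms(2)], unfold pmult_sum_left pmult_psmult_left)
    (auto intro!: relideal_sum relideal_psmult relideal_pmult_pth_left[OF assms(1)] pathalg_path_ok[OF assms(2)])

lemma rel1_eq:
  "rel1 n \<alpha> \<beta> \<gamma> i = pth (i, [D (mdec n i), U (mdec n i), U i])
    - psmult (\<alpha> i) (pth (i, [U i, D i, U i]))
    - psmult (\<beta> i) (pth (i, [U i, U (minc n i), D (minc n i)]))
    - psmult (\<gamma> i) (pth (i, [U i]))"
  by (rule ext) (simp add: rel1_def)

lemma rel2_eq:
  "rel2 n \<alpha> \<beta> \<gamma> i = pth (minc n i, [D i, D (mdec n i), U (mdec n i)])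
    - psmult (\<alpha> i) (pth (minc n i, [D i, U i, D i]))
    - psmult (\<beta> i) (pth (minc n i, [U (minc n i), D (minc n i), D i]))
    - psmult (\<gamma> i) (pth (minc n i, [D i]))"
  by (rule ext) (simp add: rel2_def)

lemma fin_supp_relideal: "x \<in> relideal n \<alpha> \<beta> \<gamma> \<Longrightarrow> fin_supp x"
proof (induction rule: relideal_induct)
  case (step x i p q r c)
  then have "fin_supp r"
    by (auto simp: rel1_eq rel2_eq intro!: fin_supp_diff fin_supp_psmult)
  then show ?case
    using step.IH by (intro fin_supp_add fin_supp_psmult fin_supp_pmult fin_supp_pth)
qed (simp add: lambda_zero_eq_zero)

section \<open>Bivariate polynomials\<close>

type_synonym 'k bipoly = "'k poly poly"

definition bconst :: "'k::comm_ring_1 \<Rightarrow> 'k bipoly" where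
  "bconst a = [:[:a:]:]"

definition bX :: "'k::comm_ring_1 bipoly" where
  "bX = [:[:0, 1:]:]"

definition bY :: "'k::comm_ring_1 bipoly" where
  "bY = [:0, 1:]"

lemma bconst_add: "bconst (a + b) = bconst a + bconst b"
  by (simp add: bconst_def)

lemma bconst_mult: "bconst (a * b) = bconst a * bconst b"
  by (simp add: bconst_def)

lemma bconst_0 [simp]: "bconst 0 = 0"
  by (simp add: bconst_def)

lemma bconst_1 [simp]: "bconst 1 = 1"
  by (simp add: bconst_def one_pCons)

lemma bconst_uminus: "bconst (- a) = - bconst a"
  by (simp add: bconst_def)

lemma bX_nonzero [simp]: "bX \<noteq> 0"
  by (simp add: bX_def)

lemma map_poly_hom_add:
  assumes "h 0 = 0" "\<And>a b. h (a + b) = h a + h b"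
  shows "map_poly h (p + q) = map_poly h p + map_poly h q"
  by (rule poly_eqI) (simp add: coeff_map_poly assms)

lemma map_poly_hom_mult:
  fixes h :: "'a::comm_semiring_0 \<Rightarrow> 'b::comm_semiring_0"
  assumes "h 0 = 0" "\<And>a b. h (a + b) = h a + h b" "\<And>a b. h (a * b) = h a * h b"
  shows "map_poly h (p * q) = map_poly h p * map_poly h q"
proof (rule poly_eqI)
  fix k
  have "h (\<Sum>i\<le>k. coeff p i * coeff q (k - i)) = (\<Sum>i\<le>k. h (coeff p i * coeff q (k - i)))"
    by (rule sum_comp_morphism[of h, OF assms(1,2), symmetric, unfolded o_def])
  then have "h (\<Sum>i\<le>k. coeff p i * coeff q (k - i)) = (\<Sum>i\<le>k. h (coeff p i) * h (coeff q (k - i)))"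
    by (simp add: assms(3))
  then show "coeff (map_poly h (p * q)) k = coeff (map_poly h p * map_poly h q) k"
    by (simp add: coeff_map_poly assms(1) coeff_mult)
qed

text \<open>In \<open>'k bipoly\<close> the inner variable is \<open>X\<close>; \<open>bsubst P Q f\<close> is \<open>f(P, Q)\<close>.\<close>
definition bsubst :: "'k::comm_ring_1 bipoly \<Rightarrow> 'k bipoly \<Rightarrow> 'k bipoly \<Rightarrow> 'k bipoly" where
  "bsubst P Q f = poly (map_poly (\<lambda>c. poly (map_poly bconst c) P) f) Q"

lemma poly_map_bconst_add: "poly (map_poly bconst (a + b)) P = poly (map_poly bconst a) P + poly (map_poly bconst b) P"
  by (simp add: map_poly_hom_add bconst_add)

lemma poly_map_bconst_mult: "poly (map_poly bconst (a * b)) P = poly (map_poly bconst a) P * poly (map_poly bconst b) P"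
  by (simp add: map_poly_hom_mult bconst_add bconst_mult)

lemma bsubst_add: "bsubst P Q (f + g) = bsubst P Q f + bsubst P Q g"
  by (simp add: bsubst_def map_poly_hom_add poly_map_bconst_add)

lemma bsubst_mult: "bsubst P Q (f * g) = bsubst P Q f * bsubst P Q g"
  by (simp add: bsubst_def map_poly_hom_mult poly_map_bconst_add poly_map_bconst_mult)

lemma bsubst_bconst [simp]: "bsubst P Q (bconst a) = bconst a"
  by (simp add: bsubst_def bconst_def map_poly_pCons)

lemma bsubst_bX [simp]: "bsubst P Q bX = P"
  by (simp add: bsubst_def bX_def map_poly_pCons)

lemma bsubst_bY [simp]: "bsubst P Q bY = Q"
  by (simp add: bsubst_def bY_def map_poly_pCons bconst_def flip: one_pCons)

lemma bsubst_0 [simp]: "bsubst P Q 0 = 0" and bsubst_1 [simp]: "bsubst P Q 1 = 1"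
  using bsubst_bconst[of P Q 0] bsubst_bconst[of P Q 1] by simp_all

lemma bsubst_diff: "bsubst P Q (f - g) = bsubst P Q f - bsubst P Q g"
  using bsubst_add[of P Q "f - g" g] by (simp add: eq_diff_eq)

definition bcoeff :: "'k::comm_ring_1 bipoly \<Rightarrow> nat \<Rightarrow> nat \<Rightarrow> 'k" where
  "bcoeff f a b = coeff (coeff f b) a"

definition bsupp :: "'k::comm_ring_1 bipoly \<Rightarrow> (nat \<times> nat) set" where
  "bsupp f = {(a, b). bcoeff f a b \<noteq> 0}"

lemma finite_bsupp: "finite (bsupp f)"
proof (rule finite_subset)
  show "bsupp f \<subseteq> (\<Union>b\<le>degree f. {..degree (coeff f b)} \<times> {b})"
  proof clarify
    fix a b assume "(a, b) \<in> bsupp f"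
    then have "coeff (coeff f b) a \<noteq> 0" by (simp add: bsupp_def bcoeff_def)
    moreover from this have "coeff f b \<noteq> 0" by auto
    ultimately show "(a, b) \<in> (\<Union>b\<le>degree f. {..degree (coeff f b)} \<times> {b})"
      by (auto intro: le_degree)
  qed
qed auto

lemma bcoeff_add: "bcoeff (f + g) a b = bcoeff f a b + bcoeff g a b"
  by (simp add: bcoeff_def)

lemma bcoeff_bconst_mult: "bcoeff (bconst c * f) a b = c * bcoeff f a b"
  by (simp add: bcoeff_def bconst_def)

lemma bmonom_eq: "bconst c * bX ^ a * bY ^ b = monom (monom c a) b"
proof -
  have X: "bX = monom (monom 1 1) 0" and Y: "bY = monom 1 1" and C: "bconst c = monom (monom c 0) 0"
    by (simp_all add: bX_def bY_def bconst_def monom_0 monom_Suc one_pCons)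
  show ?thesis
    unfolding X Y C by (simp add: mult_monom monom_power)
qed

lemma bcoeff_sum_bmonom:
  assumes "finite S"
  shows "bcoeff (\<Sum>(a, b)\<in>S. bconst (c a b) * bX ^ a * bY ^ b) a0 b0 = (if (a0, b0) \<in> S then c a0 b0 else 0)"
proof -
  have "bcoeff (\<Sum>(a, b)\<in>S. bconst (c a b) * bX ^ a * bY ^ b) a0 b0
      = (\<Sum>x\<in>S. if x = (a0, b0) then c a0 b0 else 0)"
    unfolding bcoeff_def bmonom_eq coeff_sum split_beta by (intro sum.cong) (auto simp: coeff_monom)
  then show ?thesis
    using assms by (simp add: sum.delta')
qed

lemma bipoly_eqI: "(\<And>a b. bcoeff f a b = bcoeff g a b) \<Longrightarrow> f = g"
  unfolding bcoeff_def by (metis poly_eqI)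

lemma bipoly_expand:
  assumes "finite S" "bsupp f \<subseteq> S"
  shows "f = (\<Sum>(a, b)\<in>S. bconst (bcoeff f a b) * bX ^ a * bY ^ b)"
  by (rule bipoly_eqI) (use assms in \<open>auto simp: bcoeff_sum_bmonom bsupp_def\<close>)

lemma bipoly_induct [case_names const X Y add mult]:
  assumes "\<And>a. P (bconst a)" "P bX" "P bY"
    "\<And>f g. P f \<Longrightarrow> P g \<Longrightarrow> P (f + g)" "\<And>f g. P f \<Longrightarrow> P g \<Longrightarrow> P (f * g)"
  shows "P f"
proof -
  have "P (g ^ k)" if "P g" for g k
    using that assms(1)[of 1] by (induction k) (simp_all add: assms(5))
  moreover have "P (sum h A)" if "\<And>x. x \<in> A \<Longrightarrow> P (h x)" for h and A :: "(nat \<times> nat) set"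
    using that assms(1)[of 0] by (induction A rule: infinite_finite_induct) (simp_all add: assms(4))
  ultimately show ?thesis
    using assms(1-3,5) bipoly_expand[OF finite_bsupp order_refl, of f] by (metis (no_types, lifting) case_prod_beta)
qed

lemma bipoly_hom_eqI:
  assumes "\<And>a b. h1 (a + b) = h1 a + h1 b" "\<And>a b. h1 (a * b) = h1 a * h1 b"
    "\<And>a b. h2 (a + b) = h2 a + h2 b" "\<And>a b. h2 (a * b) = h2 a * h2 b"
    "\<And>a. h1 (bconst a) = h2 (bconst a)" "h1 bX = h2 bX" "h1 bY = h2 bY"
  shows "h1 f = (h2 f :: 'k::comm_ring_1 bipoly)"
  by (induction f rule: bipoly_induct) (simp_all add: assms)

lemma bsubst_bX_bY: "bsubst bX bY f = f"
  using bipoly_hom_eqI[of "bsubst bX bY" id] by (simp add: bsubst_add bsubst_mult)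

lemma bsubst_bsubst: "bsubst P Q (bsubst P' Q' f) = bsubst (bsubst P Q P') (bsubst P Q Q') f"
  by (rule bipoly_hom_eqI) (simp_all add: bsubst_add bsubst_mult)

section \<open>A representation in a skew Laurent polynomial ring\<close>

definition sigma :: "(nat \<Rightarrow> 'k::field) \<Rightarrow> (nat \<Rightarrow> 'k) \<Rightarrow> (nat \<Rightarrow> 'k) \<Rightarrow> nat \<Rightarrow> 'k bipoly \<Rightarrow> 'k bipoly" where
  "sigma \<alpha> \<beta> \<gamma> i = bsubst bY (bconst (\<alpha> i) * bY + bconst (\<beta> i) * bX + bconst (\<gamma> i))"

definition sigma_inv :: "(nat \<Rightarrow> 'k::field) \<Rightarrow> (nat \<Rightarrow> 'k) \<Rightarrow> (nat \<Rightarrow> 'k) \<Rightarrow> nat \<Rightarrow> 'k bipoly \<Rightarrow> 'k bipoly" where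
  "sigma_inv \<alpha> \<beta> \<gamma> i = bsubst (bconst (inverse (\<beta> i)) * (bY - bconst (\<alpha> i) * bX - bconst (\<gamma> i))) bX"

lemma sigma_add: "sigma \<alpha> \<beta> \<gamma> i (f + g) = sigma \<alpha> \<beta> \<gamma> i f + sigma \<alpha> \<beta> \<gamma> i g"
  and sigma_mult: "sigma \<alpha> \<beta> \<gamma> i (f * g) = sigma \<alpha> \<beta> \<gamma> i f * sigma \<alpha> \<beta> \<gamma> i g"
  and sigma_diff: "sigma \<alpha> \<beta> \<gamma> i (f - g) = sigma \<alpha> \<beta> \<gamma> i f - sigma \<alpha> \<beta> \<gamma> i g"
  and sigma_bconst [simp]: "sigma \<alpha> \<beta> \<gamma> i (bconst c) = bconst c"
  and sigma_bX [simp]: "sigma \<alpha> \<beta> \<gamma> i bX = bY"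
  and sigma_bY: "sigma \<alpha> \<beta> \<gamma> i bY = bconst (\<alpha> i) * bY + bconst (\<beta> i) * bX + bconst (\<gamma> i)"
  by (simp_all add: sigma_def bsubst_add bsubst_mult bsubst_diff)

lemma sigma_inv_add: "sigma_inv \<alpha> \<beta> \<gamma> i (f + g) = sigma_inv \<alpha> \<beta> \<gamma> i f + sigma_inv \<alpha> \<beta> \<gamma> i g"
  and sigma_inv_mult: "sigma_inv \<alpha> \<beta> \<gamma> i (f * g) = sigma_inv \<alpha> \<beta> \<gamma> i f * sigma_inv \<alpha> \<beta> \<gamma> i g"
  and sigma_inv_diff: "sigma_inv \<alpha> \<beta> \<gamma> i (f - g) = sigma_inv \<alpha> \<beta> \<gamma> i f - sigma_inv \<alpha> \<beta> \<gamma> i g"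
  and sigma_inv_bconst [simp]: "sigma_inv \<alpha> \<beta> \<gamma> i (bconst c) = bconst c"
  and sigma_inv_bY [simp]: "sigma_inv \<alpha> \<beta> \<gamma> i bY = bX"
  and sigma_inv_bX: "sigma_inv \<alpha> \<beta> \<gamma> i bX = bconst (inverse (\<beta> i)) * (bY - bconst (\<alpha> i) * bX - bconst (\<gamma> i))"
  by (simp_all add: sigma_inv_def bsubst_add bsubst_mult bsubst_diff)

lemma sigma_0 [simp]: "sigma \<alpha> \<beta> \<gamma> i 0 = 0" and sigma_1 [simp]: "sigma \<alpha> \<beta> \<gamma> i 1 = 1"
  and sigma_inv_0 [simp]: "sigma_inv \<alpha> \<beta> \<gamma> i 0 = 0" and sigma_inv_1 [simp]: "sigma_inv \<alpha> \<beta> \<gamma> i 1 = 1"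
  by (simp_all add: sigma_def sigma_inv_def)

lemma bconst_inverse_cancel:
  fixes b :: "'k::field"
  assumes "b \<noteq> 0"
  shows "bconst b * (bconst (inverse b) * f) = f" "bconst (inverse b) * (bconst b * f) = f"
proof -
  have "bconst b * bconst (inverse b) = 1"
    using assms by (simp add: right_inverse flip: bconst_mult)
  then show "bconst b * (bconst (inverse b) * f) = f" "bconst (inverse b) * (bconst b * f) = f"
    by (simp_all add: mult.assoc[symmetric] mult.commute[of "bconst (inverse b)"])
qed

lemma sigma_sigma_inv:
  assumes "\<beta> i \<noteq> 0"
  shows "sigma \<alpha> \<beta> \<gamma> i (sigma_inv \<alpha> \<beta> \<gamma> i f) = f"
proof -
  have "bsubst bY (bconst (\<alpha> i) * bY + bconst (\<beta> i) * bX + bconst (\<gamma> i))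
      (bconst (inverse (\<beta> i)) * (bY - bconst (\<alpha> i) * bX - bconst (\<gamma> i)))
    = bconst (inverse (\<beta> i)) * ((bconst (\<alpha> i) * bY + bconst (\<beta> i) * bX + bconst (\<gamma> i))
        - bconst (\<alpha> i) * bY - bconst (\<gamma> i))"
    by (simp add: bsubst_mult bsubst_diff)
  also have "\<dots> = bX"
    by (simp add: bconst_inverse_cancel[OF assms])
  finally show ?thesis
    unfolding sigma_def sigma_inv_def bsubst_bsubst bsubst_bX by (simp only: bsubst_bX_bY)
qed

lemma sigma_inv_sigma:
  assumes "\<beta> i \<noteq> 0"
  shows "sigma_inv \<alpha> \<beta> \<gamma> i (sigma \<alpha> \<beta> \<gamma> i f) = f"
proof -
  have "bsubst (bconst (inverse (\<beta> i)) * (bY - bconst (\<alpha> i) * bX - bconst (\<gamma> i))) bX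
      (bconst (\<alpha> i) * bY + bconst (\<beta> i) * bX + bconst (\<gamma> i))
    = bconst (\<alpha> i) * bX + bconst (\<beta> i) * (bconst (inverse (\<beta> i)) * (bY - bconst (\<alpha> i) * bX - bconst (\<gamma> i)))
      + bconst (\<gamma> i)"
    by (simp add: bsubst_mult bsubst_add)
  also have "\<dots> = bY"
    by (simp add: bconst_inverse_cancel[OF assms])
  finally show ?thesis
    unfolding sigma_def sigma_inv_def bsubst_bsubst bsubst_bY by (simp only: bsubst_bX_bY)
qed

text \<open>A word \<open>w\<close> of arrows stands for \<open>word_poly w \<cdot> t\<^bsup>word_deg w\<^esup>\<close>, and
  \<open>t\<^bsup>word_deg w\<^esup> \<cdot> f = word_twist w f \<cdot> t\<^bsup>word_deg w\<^esup>\<close>.\<close>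

fun word_poly :: "(nat \<Rightarrow> 'k::field) \<Rightarrow> (nat \<Rightarrow> 'k) \<Rightarrow> (nat \<Rightarrow> 'k) \<Rightarrow> arr list \<Rightarrow> 'k bipoly" where
  "word_poly \<alpha> \<beta> \<gamma> [] = 1"
| "word_poly \<alpha> \<beta> \<gamma> (U j # w) = bX * sigma_inv \<alpha> \<beta> \<gamma> j (word_poly \<alpha> \<beta> \<gamma> w)"
| "word_poly \<alpha> \<beta> \<gamma> (D j # w) = sigma \<alpha> \<beta> \<gamma> j (word_poly \<alpha> \<beta> \<gamma> w)"

fun word_twist :: "(nat \<Rightarrow> 'k::field) \<Rightarrow> (nat \<Rightarrow> 'k) \<Rightarrow> (nat \<Rightarrow> 'k) \<Rightarrow> arr list \<Rightarrow> 'k bipoly \<Rightarrow> 'k bipoly" where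
  "word_twist \<alpha> \<beta> \<gamma> [] f = f"
| "word_twist \<alpha> \<beta> \<gamma> (U j # w) f = sigma_inv \<alpha> \<beta> \<gamma> j (word_twist \<alpha> \<beta> \<gamma> w f)"
| "word_twist \<alpha> \<beta> \<gamma> (D j # w) f = sigma \<alpha> \<beta> \<gamma> j (word_twist \<alpha> \<beta> \<gamma> w f)"

fun word_deg :: "arr list \<Rightarrow> int" where
  "word_deg [] = 0"
| "word_deg (U j # w) = word_deg w - 1"
| "word_deg (D j # w) = word_deg w + 1"

lemma word_twist_add: "word_twist \<alpha> \<beta> \<gamma> w (f + g) = word_twist \<alpha> \<beta> \<gamma> w f + word_twist \<alpha> \<beta> \<gamma> w g"
  by (induction \<alpha> \<beta> \<gamma> w f rule: word_twist.induct) (simp_all add: sigma_add sigma_inv_add)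

lemma word_twist_mult: "word_twist \<alpha> \<beta> \<gamma> w (f * g) = word_twist \<alpha> \<beta> \<gamma> w f * word_twist \<alpha> \<beta> \<gamma> w g"
  by (induction \<alpha> \<beta> \<gamma> w f rule: word_twist.induct) (simp_all add: sigma_mult sigma_inv_mult)

lemma word_twist_bconst [simp]: "word_twist \<alpha> \<beta> \<gamma> w (bconst c) = bconst c"
  by (induction \<alpha> \<beta> \<gamma> w "bconst c" rule: word_twist.induct) simp_all

lemma word_twist_0 [simp]: "word_twist \<alpha> \<beta> \<gamma> w 0 = 0"
  using word_twist_bconst[of \<alpha> \<beta> \<gamma> w 0] by simp

lemma word_twist_sum: "word_twist \<alpha> \<beta> \<gamma> w (sum f A) = (\<Sum>x\<in>A. word_twist \<alpha> \<beta> \<gamma> w (f x))"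
  using sum_comp_morphism[of "word_twist \<alpha> \<beta> \<gamma> w" f A] by (simp add: word_twist_add o_def)

lemma word_twist_append: "word_twist \<alpha> \<beta> \<gamma> (v @ w) f = word_twist \<alpha> \<beta> \<gamma> v (word_twist \<alpha> \<beta> \<gamma> w f)"
  by (induction \<alpha> \<beta> \<gamma> v f rule: word_twist.induct) simp_all

lemma word_poly_append:
  "word_poly \<alpha> \<beta> \<gamma> (v @ w) = word_poly \<alpha> \<beta> \<gamma> v * word_twist \<alpha> \<beta> \<gamma> v (word_poly \<alpha> \<beta> \<gamma> w)"
  by (induction \<alpha> \<beta> \<gamma> v rule: word_poly.induct) (simp_all add: sigma_mult sigma_inv_mult mult.assoc)

lemma word_deg_append: "word_deg (v @ w) = word_deg v + word_deg w"
  by (induction v rule: word_deg.induct) simp_all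

fun down_path :: "nat \<Rightarrow> nat \<Rightarrow> nat \<Rightarrow> arr list" where
  "down_path n v 0 = []"
| "down_path n v (Suc m) = D (mdec n v) # down_path n (mdec n v) m"

fun down_end :: "nat \<Rightarrow> nat \<Rightarrow> nat \<Rightarrow> nat" where
  "down_end n v 0 = v"
| "down_end n v (Suc m) = down_end n (mdec n v) m"

fun up_path :: "nat \<Rightarrow> nat \<Rightarrow> nat \<Rightarrow> arr list" where
  "up_path n v 0 = []"
| "up_path n v (Suc m) = U v # up_path n (minc n v) m"

fun up_end :: "nat \<Rightarrow> nat \<Rightarrow> nat \<Rightarrow> nat" where
  "up_end n v 0 = v"
| "up_end n v (Suc m) = up_end n (minc n v) m"

lemma down_path_snoc: "down_path n v (Suc m) = down_path n v m @ [D (mdec n (down_end n v m))]"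
  and down_end_Suc: "down_end n v (Suc m) = mdec n (down_end n v m)"
  by (induction m arbitrary: v) simp_all

lemma up_path_snoc: "up_path n v (Suc m) = up_path n v m @ [U (up_end n v m)]"
  and up_end_Suc: "up_end n v (Suc m) = minc n (up_end n v m)"
  by (induction m arbitrary: v) simp_all

lemma word_deg_down_path [simp]: "word_deg (down_path n v m) = int m"
  by (induction m arbitrary: v) simp_all

lemma word_deg_up_path [simp]: "word_deg (up_path n v m) = - int m"
  by (induction m arbitrary: v) simp_all

lemma word_poly_down_path [simp]: "word_poly \<alpha> \<beta> \<gamma> (down_path n v m) = 1"
  by (induction m arbitrary: v) simp_all

text \<open>The twist \<open>t\<^sup>m f = twist v m f \<cdot> t\<^sup>m\<close> at vertex \<open>v\<close>, computed along a shortest path of degree \<open>m\<close>.\<close>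
definition twist :: "nat \<Rightarrow> (nat \<Rightarrow> 'k::field) \<Rightarrow> (nat \<Rightarrow> 'k) \<Rightarrow> (nat \<Rightarrow> 'k) \<Rightarrow> nat \<Rightarrow> int \<Rightarrow> 'k bipoly \<Rightarrow> 'k bipoly" where
  "twist n \<alpha> \<beta> \<gamma> v m = word_twist \<alpha> \<beta> \<gamma> (if 0 \<le> m then down_path n v (nat m) else up_path n v (nat (- m)))"

lemma twist_mult: "twist n \<alpha> \<beta> \<gamma> v m (f * g) = twist n \<alpha> \<beta> \<gamma> v m f * twist n \<alpha> \<beta> \<gamma> v m g"
  and twist_bconst [simp]: "twist n \<alpha> \<beta> \<gamma> v m (bconst c) = bconst c"
  and twist_0 [simp]: "twist n \<alpha> \<beta> \<gamma> v m 0 = 0"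
  and twist_sum: "twist n \<alpha> \<beta> \<gamma> v m (sum h A) = (\<Sum>x\<in>A. twist n \<alpha> \<beta> \<gamma> v m (h x))"
  by (simp_all add: twist_def word_twist_mult word_twist_sum)

locale H_algebra =
  fixes n :: nat and \<alpha> \<beta> \<gamma> :: "nat \<Rightarrow> 'k::field"
  assumes n_pos: "1 \<le> n"
    and beta_nonzero: "\<And>i. i < n \<Longrightarrow> \<beta> i \<noteq> 0"
begin

abbreviation "\<sigma> \<equiv> sigma \<alpha> \<beta> \<gamma>"
abbreviation "\<sigma>' \<equiv> sigma_inv \<alpha> \<beta> \<gamma>"
abbreviation "\<phi> \<equiv> word_poly \<alpha> \<beta> \<gamma>"
abbreviation "\<tau> \<equiv> word_twist \<alpha> \<beta> \<gamma>"
abbreviation "T \<equiv> twist n \<alpha> \<beta> \<gamma>"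

lemma mdec_less [simp]: "mdec n v < n"
  and minc_less [simp]: "minc n v < n"
  using n_pos by (simp_all add: mdec_def minc_def)

lemma minc_mdec [simp]: "v < n \<Longrightarrow> minc n (mdec n v) = v"
  using n_pos by (simp add: minc_def mdec_def mod_Suc_eq)

lemma mdec_minc [simp]:
  assumes "v < n"
  shows "mdec n (minc n v) = v"
proof -
  have "mdec n (minc n v) = ((v + 1) mod n + (n - 1)) mod n"
    unfolding minc_def mdec_def using n_pos by simp
  also have "\<dots> = (v + 1 + (n - 1)) mod n"
    by (simp add: mod_add_left_eq)
  also have "v + 1 + (n - 1) = v + n" using n_pos by simp
  finally show ?thesis using assms by simp
qed

lemma Suc_mod_eq_minc [simp]: "Suc v mod n = minc n v"
  by (simp add: minc_def)

lemma valid_down_path: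
  "v < n \<Longrightarrow> valid_from n v (down_path n v m) \<and> path_tgt n v (down_path n v m) = down_end n v m
    \<and> down_end n v m < n"
  by (induction m arbitrary: v) simp_all

lemma valid_up_path:
  "v < n \<Longrightarrow> valid_from n v (up_path n v m) \<and> path_tgt n v (up_path n v m) = up_end n v m
    \<and> up_end n v m < n"
  by (induction m arbitrary: v) simp_all

lemma twist_succ:
  assumes "v < n"
  shows "\<sigma> (mdec n v) (T (mdec n v) m f) = T v (m + 1) f"
proof (cases "0 \<le> m")
  case True
  then have "nat (m + 1) = Suc (nat m)" by simp
  with True show ?thesis by (simp add: twist_def)
next
  case False
  define k where "k = nat (- m) - 1"
  have "nat (- m) = Suc k" "nat (- (m + 1)) = k" using False by (simp_all add: k_def)
  with False assms show ?thesis by (auto simp: twist_def sigma_sigma_inv beta_nonzero)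
qed

lemma twist_pred:
  assumes "v < n"
  shows "\<sigma>' v (T (minc n v) m f) = T v (m - 1) f"
proof (cases "m \<le> 0")
  case True
  then have "nat (- (m - 1)) = Suc (nat (- m))" by simp
  with True show ?thesis by (auto simp: twist_def)
next
  case False
  define k where "k = nat m - 1"
  have "nat m = Suc k" "nat (m - 1) = k" using False by (simp_all add: k_def)
  with False assms show ?thesis by (auto simp: twist_def sigma_inv_sigma beta_nonzero)
qed

lemma word_twist_eq_twist: "v < n \<Longrightarrow> valid_from n v w \<Longrightarrow> \<tau> w f = T v (word_deg w) f"
proof (induction w arbitrary: v)
  case Nil
  then show ?case by (simp add: twist_def)
next
  case (Cons a w)
  show ?case
  proof (cases a)
    case (U j)
    with Cons.prems have "j = v" "valid_from n (minc n v) w" by auto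
    with U Cons.IH[of "minc n v"] show ?thesis by (simp add: twist_pred[OF Cons.prems(1)])
  next
    case (D j)
    with Cons.prems have "j < n" "v = minc n j" "valid_from n j w" by auto
    with D Cons.IH[of j] twist_succ[of "minc n j" "word_deg w" f] show ?thesis by simp
  qed
qed

lemma word_twist_eq_0: "valid_from n v w \<Longrightarrow> \<tau> w f = 0 \<Longrightarrow> f = 0"
proof (induction w arbitrary: v)
  case (Cons a w)
  show ?case
  proof (cases a)
    case (U j)
    with Cons.prems have "\<sigma> j (\<sigma>' j (\<tau> w f)) = 0" "j < n" "valid_from n (minc n j) w" by auto
    with Cons.IH show ?thesis by (simp add: sigma_sigma_inv beta_nonzero)
  next
    case (D j)
    with Cons.prems have "\<sigma>' j (\<sigma> j (\<tau> w f)) = 0" "j < n" "valid_from n j w" by auto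
    with Cons.IH show ?thesis by (simp add: sigma_inv_sigma beta_nonzero)
  qed
qed simp

lemma twist_eq_0:
  assumes "v < n" "T v m f = 0"
  shows "f = 0"
proof -
  have "valid_from n v (if 0 \<le> m then down_path n v (nat m) else up_path n v (nat (- m)))"
    using valid_down_path[OF assms(1)] valid_up_path[OF assms(1)] by simp
  from word_twist_eq_0[OF this] assms(2) show ?thesis
    by (simp add: twist_def)
qed

end

text \<open>\<open>Phi x v M\<close> is the coefficient of \<open>t\<^sup>M\<close> in the image of \<open>e\<^sub>v x\<close>.\<close>
definition Phi :: "(nat \<Rightarrow> 'k::field) \<Rightarrow> (nat \<Rightarrow> 'k) \<Rightarrow> (nat \<Rightarrow> 'k) \<Rightarrow> (path \<Rightarrow> 'k) \<Rightarrow> nat \<Rightarrow> int \<Rightarrow> 'k bipoly" where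
  "Phi \<alpha> \<beta> \<gamma> x v M = (\<Sum>p | x p \<noteq> 0.
     if fst p = v \<and> word_deg (snd p) = M then bconst (x p) * word_poly \<alpha> \<beta> \<gamma> (snd p) else 0)"

lemma Phi_eq_sum:
  assumes "finite S" "{p. x p \<noteq> 0} \<subseteq> S"
  shows "Phi \<alpha> \<beta> \<gamma> x v M = (\<Sum>p\<in>S.
    if fst p = v \<and> word_deg (snd p) = M then bconst (x p) * word_poly \<alpha> \<beta> \<gamma> (snd p) else 0)"
  unfolding Phi_def by (rule sum.mono_neutral_left) (use assms in auto)

lemma Phi_zero [simp]: "Phi \<alpha> \<beta> \<gamma> 0 v M = 0"
  by (simp add: Phi_def)

lemma Phi_add:
  assumes "fin_supp x" "fin_supp y"
  shows "Phi \<alpha> \<beta> \<gamma> (x + y) v M = Phi \<alpha> \<beta> \<gamma> x v M + Phi \<alpha> \<beta> \<gamma> y v M"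
proof -
  define S where "S = {p. x p \<noteq> 0} \<union> {p. y p \<noteq> 0}"
  have "finite S"
    using assms by (simp add: fin_supp_def S_def)
  then show ?thesis
    by (subst (1 2 3) Phi_eq_sum[of S]) (auto simp: S_def bconst_add distrib_right sum.distrib[symmetric] intro!: sum.cong)
qed

lemma Phi_psmult:
  assumes "fin_supp x"
  shows "Phi \<alpha> \<beta> \<gamma> (psmult c x) v M = bconst c * Phi \<alpha> \<beta> \<gamma> x v M"
proof -
  have "finite {p. x p \<noteq> 0}" using assms by (simp add: fin_supp_def)
  then show ?thesis
    by (subst (1 2) Phi_eq_sum[of "{p. x p \<noteq> 0}"]) (auto simp: bconst_mult sum_distrib_left mult.assoc intro!: sum.cong)
qed

lemma Phi_diff:
  assumes "fin_supp x" "fin_supp y"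
  shows "Phi \<alpha> \<beta> \<gamma> (x - y) v M = Phi \<alpha> \<beta> \<gamma> x v M - Phi \<alpha> \<beta> \<gamma> y v M"
proof -
  have "x - y = x + psmult (- 1) y" by (rule ext) simp
  then show ?thesis
    using assms by (simp only: Phi_add Phi_psmult fin_supp_psmult) (simp add: bconst_uminus)
qed

lemma Phi_sum:
  "(\<And>j. j \<in> J \<Longrightarrow> fin_supp (f j)) \<Longrightarrow> Phi \<alpha> \<beta> \<gamma> (sum f J) v M = (\<Sum>j\<in>J. Phi \<alpha> \<beta> \<gamma> (f j) v M)"
proof (induction J rule: infinite_finite_induct)
  case (insert j J)
  then show ?case by (simp add: Phi_add fin_supp_sum del: sum_fun_apply plus_fun_apply)
qed simp_all

lemma Phi_pth:
  "Phi \<alpha> \<beta> \<gamma> (pth p) v M = (if fst p = v \<and> word_deg (snd p) = M then word_poly \<alpha> \<beta> \<gamma> (snd p) else 0)"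
  by (subst Phi_eq_sum[of "{p}"]) (auto simp: pth_def)

lemma Phi_pth_combination:
  assumes "word_deg w2 = word_deg w1" "word_deg w3 = word_deg w1" "word_deg w4 = word_deg w1"
  shows "Phi \<alpha> \<beta> \<gamma> (pth (u, w1) - psmult a (pth (u, w2)) - psmult b (pth (u, w3)) - psmult c (pth (u, w4))) v M
    = (if u = v \<and> word_deg w1 = M then word_poly \<alpha> \<beta> \<gamma> w1 - bconst a * word_poly \<alpha> \<beta> \<gamma> w2
        - bconst b * word_poly \<alpha> \<beta> \<gamma> w3 - bconst c * word_poly \<alpha> \<beta> \<gamma> w4 else 0)"
  using assms by (simp add: Phi_diff Phi_psmult Phi_pth fin_supp_diff fin_supp_psmult)

context H_algebra
begin

abbreviation "\<Phi> \<equiv> Phi \<alpha> \<beta> \<gamma>"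

lemma rel1_in_corner: "i < n \<Longrightarrow> rel1 n \<alpha> \<beta> \<gamma> i \<in> corner n i (minc n i)"
  unfolding rel1_eq by (intro corner_diff corner_psmult pth_in_corner) auto

lemma rel2_in_corner: "i < n \<Longrightarrow> rel2 n \<alpha> \<beta> \<gamma> i \<in> corner n (minc n i) i"
  unfolding rel2_eq by (intro corner_diff corner_psmult pth_in_corner) auto

lemma Phi_corner_other_vertex: "a \<in> corner n i k \<Longrightarrow> v \<noteq> i \<Longrightarrow> \<Phi> a v M = 0"
  unfolding Phi_def by (auto simp: corner_def intro!: sum.neutral)

lemma Phi_pmult_pth:
  assumes w: "i < n" "valid_from n i w" and b: "b \<in> corner n (path_tgt n i w) j"
  shows "\<Phi> (pmult n (pth (i, w)) b) i M
    = \<phi> w * T i (word_deg w) (\<Phi> b (path_tgt n i w) (M - word_deg w))"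
proof -
  define k where "k = path_tgt n i w"
  define S where "S = {q. b q \<noteq> 0}"
  have q: "fst q = k" if "q \<in> S" for q
    using corner_support[OF b, of q] that by (simp add: S_def k_def)
  have "pmult n (pth (i, w)) b = (\<Sum>q\<in>S. psmult (b q) (pmult n (pth (i, w)) (pth q)))"
    by (subst fin_supp_expand[OF corner_fin_supp[OF b]])
      (simp add: pmult_sum_right pmult_psmult_right S_def)
  also have "\<dots> = (\<Sum>q\<in>S. psmult (b q) (pth (i, w @ snd q)))"
    by (rule sum.cong) (simp_all add: pmult_pth_pth q k_def)
  finally have "\<Phi> (pmult n (pth (i, w)) b) i M = (\<Sum>q\<in>S.
      if word_deg (snd q) = M - word_deg w then bconst (b q) * (\<phi> w * T i (word_deg w) (\<phi> (snd q))) else 0)"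
    by (auto simp: Phi_sum Phi_psmult Phi_pth fin_supp_psmult word_deg_append word_poly_append
        word_twist_eq_twist[OF w] intro!: sum.cong)
  also have "\<dots> = \<phi> w * T i (word_deg w) (\<Sum>q\<in>S.
      if fst q = k \<and> word_deg (snd q) = M - word_deg w then bconst (b q) * \<phi> (snd q) else 0)"
    by (auto simp: twist_sum sum_distrib_left twist_mult q intro!: sum.cong)
  also have "\<dots> = \<phi> w * T i (word_deg w) (\<Phi> b k (M - word_deg w))"
    by (simp add: Phi_def S_def)
  finally show ?thesis by (simp add: k_def)
qed

lemma Phi_corner_fiber:
  assumes a: "a \<in> corner n i k"
  shows "\<Phi> a i m = (\<Sum>p | a p \<noteq> 0 \<and> word_deg (snd p) = m. bconst (a p) * \<phi> (snd p))"
proof -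
  have "finite {p. a p \<noteq> 0}"
    using corner_fin_supp[OF a] by (simp add: fin_supp_def)
  moreover have "{p. a p \<noteq> 0 \<and> fst p = i \<and> word_deg (snd p) = m} = {p. a p \<noteq> 0 \<and> word_deg (snd p) = m}"
    using corner_support(1)[OF a] by auto
  ultimately show ?thesis
    unfolding Phi_def by (simp add: sum.inter_filter[symmetric])
qed

lemma Phi_pmult:
  assumes a: "a \<in> corner n i k" and b: "b \<in> corner n k j"
  shows "\<Phi> (pmult n a b) i M
    = (\<Sum>m\<in>word_deg ` snd ` {p. a p \<noteq> 0}. \<Phi> a i m * T i m (\<Phi> b k (M - m)))"
proof -
  define S where "S = {p. a p \<noteq> 0}"
  have fin: "finite S"
    using corner_fin_supp[OF a] by (simp add: S_def fin_supp_def)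
  have p: "p = (i, snd p)" "i < n" "valid_from n i (snd p)" "path_tgt n i (snd p) = k" if "p \<in> S" for p
    using corner_support[OF a, of p] that by (auto simp: S_def prod_eq_iff)
  have "\<Phi> (pmult n a b) i M = (\<Sum>p\<in>S. bconst (a p) * \<Phi> (pmult n (pth p) b) i M)"
    by (subst fin_supp_expand[OF corner_fin_supp[OF a]])
      (simp add: S_def pmult_sum_left pmult_psmult_left Phi_sum Phi_psmult fin_supp_psmult
        fin_supp_pmult corner_fin_supp[OF b])
  also have "\<dots> = (\<Sum>p\<in>S. bconst (a p) * (\<phi> (snd p) * T i (word_deg (snd p)) (\<Phi> b k (M - word_deg (snd p)))))"
  proof (rule sum.cong[OF refl])
    fix p assume "p \<in> S"
    then have "\<Phi> (pmult n (pth p) b) i M = \<phi> (snd p) * T i (word_deg (snd p)) (\<Phi> b k (M - word_deg (snd p)))"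
      using p Phi_pmult_pth[of i "snd p" b j M] b by metis
    then show "bconst (a p) * \<Phi> (pmult n (pth p) b) i M
      = bconst (a p) * (\<phi> (snd p) * T i (word_deg (snd p)) (\<Phi> b k (M - word_deg (snd p))))"
      by simp
  qed
  also have "\<dots> = (\<Sum>m\<in>word_deg ` snd ` S. \<Sum>p | p \<in> S \<and> word_deg (snd p) = m.
      bconst (a p) * (\<phi> (snd p) * T i m (\<Phi> b k (M - m))))"
    by (subst sum.image_gen[OF fin, of _ "word_deg \<circ> snd"]) (auto simp: image_image intro!: sum.cong)
  also have "\<dots> = (\<Sum>m\<in>word_deg ` snd ` S. \<Phi> a i m * T i m (\<Phi> b k (M - m)))"
    by (simp add: Phi_corner_fiber[OF a] S_def sum_distrib_right mult.assoc)
  finally show ?thesis by (simp add: S_def)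
qed

lemma Phi_pmult_eq_0_left:
  assumes a: "a \<in> corner n i k" and b: "b \<in> corner n k j" and "\<And>m. \<Phi> a i m = 0"
  shows "\<Phi> (pmult n a b) v M = 0"
proof (cases "v = i")
  case True
  then show ?thesis by (simp add: Phi_pmult[OF a b] assms(3))
qed (simp add: Phi_corner_other_vertex[OF pmult_in_corner[OF a b]])

lemma Phi_pmult_eq_0_right:
  assumes a: "a \<in> corner n i k" and b: "b \<in> corner n k j" and "\<And>m. \<Phi> b k m = 0"
  shows "\<Phi> (pmult n a b) v M = 0"
proof (cases "v = i")
  case True
  then show ?thesis by (simp add: Phi_pmult[OF a b] assms(3))
qed (simp add: Phi_corner_other_vertex[OF pmult_in_corner[OF a b]])

lemma Phi_pmult_pth_pth_eq_0:
  assumes r: "r \<in> corner n s t" and r0: "\<And>m. \<Phi> r s m = 0" and "path_ok n p" "path_ok n q"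
  shows "\<Phi> (pmult n (pmult n (pth p) r) (pth q)) v M = 0"
proof -
  obtain i w where p: "p = (i, w)" "i < n" "valid_from n i w"
    using \<open>path_ok n p\<close> by (cases p) (auto simp: path_ok_def)
  obtain j w' where q: "q = (j, w')" "j < n" "valid_from n j w'"
    using \<open>path_ok n q\<close> by (cases q) (auto simp: path_ok_def)
  show ?thesis
  proof (cases "path_tgt n i w = s")
    case True
    then have pc: "pth p \<in> corner n i s"
      using p by (simp add: pth_in_corner)
    have pr: "pmult n (pth p) r \<in> corner n i t"
      by (rule pmult_in_corner[OF pc r])
    have pr0: "\<Phi> (pmult n (pth p) r) i m = 0" for m
      by (rule Phi_pmult_eq_0_right[OF pc r r0])
    show ?thesis
    proof (cases "j = t")
      case True
      then have "pth q \<in> corner n t (path_tgt n t w')"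
        using q by (simp add: pth_in_corner)
      then show ?thesis
        by (rule Phi_pmult_eq_0_left[OF pr _ pr0])
    next
      case False
      then show ?thesis
        using q by (simp add: pmult_corner_eq_0[OF pr pth_in_corner[OF q(2,3) refl]])
    qed
  next
    case False
    then show ?thesis
      using p by (simp add: pmult_corner_eq_0[OF pth_in_corner[OF p(2,3) refl] r])
  qed
qed

lemma Phi_rel1:
  assumes i: "i < n"
  shows "\<Phi> (rel1 n \<alpha> \<beta> \<gamma> i) v M = 0"
proof -
  have 1: "\<phi> [D (mdec n i), U (mdec n i), U i] = bY * bX"
    by (simp add: sigma_mult sigma_sigma_inv beta_nonzero)
  have 2: "\<phi> [U i, D i, U i] = bX * bX"
    by (simp add: sigma_inv_sigma beta_nonzero i)
  have "\<phi> [U i, U (minc n i), D (minc n i)]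
      = bX * (bconst (inverse (\<beta> i)) * (bY - bconst (\<alpha> i) * bX - bconst (\<gamma> i)))"
    by (simp add: sigma_inv_mult sigma_inv_sigma beta_nonzero sigma_inv_bX)
  then have 3: "bconst (\<beta> i) * \<phi> [U i, U (minc n i), D (minc n i)] = bX * (bY - bconst (\<alpha> i) * bX - bconst (\<gamma> i))"
    by (simp only: mult.left_commute[of "bconst (\<beta> i)" bX] bconst_inverse_cancel(1)[OF beta_nonzero[OF i]])
  have 4: "\<phi> [U i] = bX"
    by simp
  have "\<phi> [D (mdec n i), U (mdec n i), U i] - bconst (\<alpha> i) * \<phi> [U i, D i, U i]
      - bconst (\<beta> i) * \<phi> [U i, U (minc n i), D (minc n i)] - bconst (\<gamma> i) * \<phi> [U i] = 0"
    unfolding 1 2 3 4 by (simp add: algebra_simps)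
  then show ?thesis
    unfolding rel1_eq by (subst Phi_pth_combination) auto
qed

lemma Phi_rel2:
  assumes i: "i < n"
  shows "\<Phi> (rel2 n \<alpha> \<beta> \<gamma> i) v M = 0"
proof -
  have "\<phi> [D i, D (mdec n i), U (mdec n i)] = bconst (\<alpha> i) * bY + bconst (\<beta> i) * bX + bconst (\<gamma> i)"
    by (simp add: sigma_mult sigma_sigma_inv beta_nonzero sigma_bY)
  moreover have "\<phi> [D i, U i, D i] = bY"
    by (simp add: sigma_inv_sigma beta_nonzero i)
  moreover have "\<phi> [U (minc n i), D (minc n i), D i] = bX"
    by (simp add: sigma_inv_sigma beta_nonzero)
  ultimately have "\<phi> [D i, D (mdec n i), U (mdec n i)] - bconst (\<alpha> i) * \<phi> [D i, U i, D i]
      - bconst (\<beta> i) * \<phi> [U (minc n i), D (minc n i), D i] - bconst (\<gamma> i) * \<phi> [D i] = 0"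
    by simp
  then show ?thesis
    unfolding rel2_eq by (subst Phi_pth_combination) auto
qed

lemma Phi_relideal: "x \<in> relideal n \<alpha> \<beta> \<gamma> \<Longrightarrow> \<Phi> x v M = 0"
proof (induction rule: relideal_induct)
  case (step x i p q r c)
  obtain s t where r: "r \<in> corner n s t" and r0: "\<And>m. \<Phi> r s m = 0"
    using step.hyps(2,5) rel1_in_corner rel2_in_corner Phi_rel1 Phi_rel2 by blast
  have "fin_supp r"
    using corner_fin_supp[OF r] .
  then show ?case
    using step Phi_pmult_pth_pth_eq_0[OF r r0]
    by (simp add: Phi_add Phi_psmult fin_supp_relideal fin_supp_psmult fin_supp_pmult del: plus_fun_apply)
qed (simp add: lambda_zero_eq_zero)

lemma Phi_corner_support:
  assumes "a \<in> corner n i k" "\<Phi> a i m \<noteq> 0"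
  shows "m \<in> word_deg ` snd ` {p. a p \<noteq> 0}"
proof -
  obtain p where "a p \<noteq> 0" "word_deg (snd p) = m"
    using assms(2) unfolding Phi_corner_fiber[OF assms(1)] by (auto elim: sum.not_neutral_contains_not_neutral)
  then show ?thesis by auto
qed

lemma finite_Phi_corner_support:
  assumes "a \<in> corner n i k"
  shows "finite {m. \<Phi> a i m \<noteq> 0}"
proof (rule finite_subset)
  show "{m. \<Phi> a i m \<noteq> 0} \<subseteq> word_deg ` snd ` {p. a p \<noteq> 0}"
    using Phi_corner_support[OF assms] by blast
  show "finite (word_deg ` snd ` {p. a p \<noteq> 0})"
    using corner_fin_supp[OF assms] by (simp add: fin_supp_def)
qed

text \<open>The leading terms multiply to a nonzero leading term, since \<open>k[X,Y]\<close> is a domain and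
  twisting is injective.\<close>
lemma Phi_pmult_nonzero:
  assumes a: "a \<in> corner n i k" and b: "b \<in> corner n k j"
    and "\<Phi> a i ma \<noteq> 0" and "\<Phi> b k mb \<noteq> 0"
  shows "\<exists>M. \<Phi> (pmult n a b) i M \<noteq> 0"
proof -
  define Da where "Da = {m. \<Phi> a i m \<noteq> 0}"
  define Db where "Db = {m. \<Phi> b k m \<noteq> 0}"
  have fa: "finite Da" and fb: "finite Db"
    unfolding Da_def Db_def by (rule finite_Phi_corner_support[OF a], rule finite_Phi_corner_support[OF b])
  have ne: "Da \<noteq> {}" "Db \<noteq> {}"
    using assms(3,4) by (auto simp: Da_def Db_def)
  define A where "A = Max Da"
  define B where "B = Max Db"
  have A: "A \<in> Da" "\<And>m. m \<in> Da \<Longrightarrow> m \<le> A"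
    using Max_in[OF fa ne(1)] Max_ge[OF fa] by (simp_all add: A_def)
  have B: "B \<in> Db" "\<And>m. m \<in> Db \<Longrightarrow> m \<le> B"
    using Max_in[OF fb ne(2)] Max_ge[OF fb] by (simp_all add: B_def)
  have "A \<in> word_deg ` snd ` {p. a p \<noteq> 0}"
    using A(1) Phi_corner_support[OF a] by (simp add: Da_def)
  then obtain p where "a p \<noteq> 0"
    by blast
  then have i: "i < n"
    by (rule corner_support(4)[OF a])
  have "\<Phi> (pmult n a b) i (A + B) = (\<Sum>m\<in>word_deg ` snd ` {p. a p \<noteq> 0}.
      if m = A then \<Phi> a i A * T i A (\<Phi> b k B) else 0)"
    unfolding Phi_pmult[OF a b]
  proof (rule sum.cong[OF refl])
    fix m
    have "\<Phi> a i m = 0 \<or> \<Phi> b k (A + B - m) = 0" if "m \<noteq> A"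
      using that A(2)[of m] B(2)[of "A + B - m"] by (fastforce simp: Da_def Db_def)
    then show "\<Phi> a i m * T i m (\<Phi> b k (A + B - m)) = (if m = A then \<Phi> a i A * T i A (\<Phi> b k B) else 0)"
      by auto
  qed
  also have "\<dots> = \<Phi> a i A * T i A (\<Phi> b k B)"
    using \<open>A \<in> word_deg ` snd ` {p. a p \<noteq> 0}\<close> corner_fin_supp[OF a]
    by (simp add: sum.delta' fin_supp_def)
  also have "\<dots> \<noteq> 0"
    using A(1) B(1) twist_eq_0[OF i] by (auto simp: Da_def Db_def)
  finally show ?thesis by blast
qed

end

section \<open>A normal form\<close>

definition loopX :: "nat \<Rightarrow> nat \<Rightarrow> arr list" where
  "loopX n v = [U v, D v]"

definition loopY :: "nat \<Rightarrow> nat \<Rightarrow> arr list" where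
  "loopY n v = [D (mdec n v), U (mdec n v)]"

definition monomial_path :: "nat \<Rightarrow> nat \<Rightarrow> nat \<Rightarrow> nat \<Rightarrow> arr list" where
  "monomial_path n v a b = concat (replicate a (loopX n v)) @ concat (replicate b (loopY n v))"

text \<open>The embedding of \<open>k[X,Y]\<close> into \<open>e\<^sub>v kQ e\<^sub>v\<close> sending \<open>X\<^sup>a Y\<^sup>b\<close> to \<open>(u\<^sub>v d\<^sub>v)\<^sup>a (d\<^sub>v\<^sub>-\<^sub>1 u\<^sub>v\<^sub>-\<^sub>1)\<^sup>b\<close>;
  it is multiplicative only modulo the relations.\<close>
definition poly_at :: "nat \<Rightarrow> nat \<Rightarrow> 'k::field bipoly \<Rightarrow> path \<Rightarrow> 'k" where
  "poly_at n v f = (\<Sum>(a, b)\<in>bsupp f. psmult (bcoeff f a b) (pth (v, monomial_path n v a b)))"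

lemma word_deg_monomial_path [simp]: "word_deg (monomial_path n v a b) = 0"
proof -
  have "word_deg (concat (replicate a w)) = 0" if "word_deg w = 0" for w a
    using that by (induction a) (simp_all add: word_deg_append)
  then show ?thesis
    by (simp add: monomial_path_def loopX_def loopY_def word_deg_append)
qed

lemma poly_at_eq_sum:
  assumes "finite S" "bsupp f \<subseteq> S"
  shows "poly_at n v f = (\<Sum>(a, b)\<in>S. psmult (bcoeff f a b) (pth (v, monomial_path n v a b)))"
  unfolding poly_at_def by (rule sum.mono_neutral_left) (use assms in \<open>auto simp: bsupp_def\<close>)

lemma poly_at_add: "poly_at n v (f + g) = poly_at n v f + poly_at n v g"
proof -
  have "finite (bsupp f \<union> bsupp g)" "bsupp (f + g) \<subseteq> bsupp f \<union> bsupp g"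
    by (auto simp: finite_bsupp) (auto simp: bsupp_def bcoeff_add)
  then show ?thesis
    by (subst (1 2 3) poly_at_eq_sum[of "bsupp f \<union> bsupp g"])
      (auto simp: bcoeff_add sum.distrib[symmetric] split_beta distrib_right intro!: sum.cong)
qed

lemma poly_at_bconst_mult: "poly_at n v (bconst c * f) = psmult c (poly_at n v f)"
proof -
  have "bsupp (bconst c * f) \<subseteq> bsupp f"
    by (auto simp: bsupp_def bcoeff_bconst_mult)
  then show ?thesis
    by (subst (1 2) poly_at_eq_sum[OF finite_bsupp])
      (auto simp: bcoeff_bconst_mult psmult_sum psmult_psmult split_beta intro!: sum.cong)
qed

lemma poly_at_0 [simp]: "poly_at n v 0 = 0"
  by (simp add: poly_at_def bsupp_def bcoeff_def)

lemma poly_at_diff: "poly_at n v (f - g) = poly_at n v f - poly_at n v g"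
  using poly_at_add[of n v "f - g" g] by (simp add: eq_diff_eq)

lemma poly_at_sum: "poly_at n v (sum f A) = (\<Sum>x\<in>A. poly_at n v (f x))"
  using sum_comp_morphism[of "poly_at n v" f A] by (simp add: poly_at_add o_def)

lemma poly_at_monomial: "poly_at n v (bconst c * bX ^ a * bY ^ b) = psmult c (pth (v, monomial_path n v a b))"
proof -
  have "bsupp (bconst c * bX ^ a * bY ^ b) \<subseteq> {(a, b)}"
    using bcoeff_sum_bmonom[of "{(a, b)}" "\<lambda>_ _. c"] by (auto simp: bsupp_def)
  then show ?thesis
    using bcoeff_sum_bmonom[of "{(a, b)}" "\<lambda>_ _. c"] by (subst poly_at_eq_sum[of "{(a, b)}"]) simp_all
qed

lemma poly_at_bconst: "poly_at n v (bconst c) = psmult c (pth (v, []))"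
  using poly_at_monomial[of n v c 0 0] by (simp add: monomial_path_def)

lemma poly_at_bX: "poly_at n v bX = pth (v, loopX n v)"
  using poly_at_monomial[of n v 1 1 0] by (simp add: monomial_path_def)

lemma poly_at_bY: "poly_at n v bY = pth (v, loopY n v)"
  using poly_at_monomial[of n v 1 0 1] by (simp add: monomial_path_def)

lemma poly_at_1: "poly_at n v 1 = pth (v, [])"
  using poly_at_bconst[of n v 1] by simp

lemma fin_supp_poly_at: "fin_supp (poly_at n v f)"
  unfolding poly_at_def split_beta by (intro fin_supp_sum fin_supp_psmult fin_supp_pth)

definition normal_form :: "nat \<Rightarrow> nat \<Rightarrow> (nat \<Rightarrow> 'k::field bipoly) \<Rightarrow> (nat \<Rightarrow> 'k bipoly) \<Rightarrow> nat \<Rightarrow> path \<Rightarrow> 'k" where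
  "normal_form n v F G K = (\<Sum>m<K. pmult n (poly_at n v (F m)) (pth (v, down_path n v m)))
    + (\<Sum>m<K. pmult n (poly_at n v (G m)) (pth (v, up_path n v m)))"

lemma normal_form_extend:
  assumes "\<forall>m\<ge>K. F m = 0 \<and> G m = 0" "K \<le> K'"
  shows "normal_form n v F G K' = normal_form n v F G K"
proof -
  have "(\<Sum>m<K'. pmult n (poly_at n v (F m)) (pth (v, down_path n v m)))
      = (\<Sum>m<K. pmult n (poly_at n v (F m)) (pth (v, down_path n v m)))"
    "(\<Sum>m<K'. pmult n (poly_at n v (G m)) (pth (v, up_path n v m)))
      = (\<Sum>m<K. pmult n (poly_at n v (G m)) (pth (v, up_path n v m)))"
    by (rule sum.mono_neutral_right; use assms in auto)+
  then show ?thesis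
    by (simp add: normal_form_def)
qed

lemma normal_form_add:
  "normal_form n v F G K + normal_form n v F' G' K = normal_form n v (\<lambda>m. F m + F' m) (\<lambda>m. G m + G' m) K"
  unfolding normal_form_def poly_at_add pmult_add_left sum.distrib by (simp add: algebra_simps del: plus_fun_apply)

lemma normal_form_psmult:
  "psmult c (normal_form n v F G K) = normal_form n v (\<lambda>m. bconst c * F m) (\<lambda>m. bconst c * G m) K"
  unfolding normal_form_def poly_at_bconst_mult pmult_psmult_left psmult_add psmult_sum ..

lemma fin_supp_normal_form: "fin_supp (normal_form n v F G K)"
  unfolding normal_form_def by (intro fin_supp_add fin_supp_sum fin_supp_pmult fin_supp_poly_at fin_supp_pth)

context H_algebra
begin

definition hcong :: "(path \<Rightarrow> 'k) \<Rightarrow> (path \<Rightarrow> 'k) \<Rightarrow> bool" (infix "\<approx>" 50) where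
  "x \<approx> y \<longleftrightarrow> x - y \<in> relideal n \<alpha> \<beta> \<gamma>"

lemma hcong_refl [simp]: "x \<approx> x"
  by (simp add: hcong_def)

lemma hcong_sym: "x \<approx> y \<Longrightarrow> y \<approx> x"
  unfolding hcong_def using relideal_diff[OF relideal_zero] by fastforce

lemma hcong_trans [trans]: "x \<approx> y \<Longrightarrow> y \<approx> z \<Longrightarrow> x \<approx> z"
  unfolding hcong_def using relideal_add[of "x - y" n \<alpha> \<beta> \<gamma> "y - z"] by (simp add: algebra_simps del: plus_fun_apply)

lemma hcong_eq_trans [trans]: "x = y \<Longrightarrow> y \<approx> z \<Longrightarrow> x \<approx> z"
  and hcong_trans_eq [trans]: "x \<approx> y \<Longrightarrow> y = z \<Longrightarrow> x \<approx> z"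
  by simp_all

lemma hcong_add: "x \<approx> y \<Longrightarrow> x' \<approx> y' \<Longrightarrow> x + x' \<approx> y + y'"
  unfolding hcong_def using relideal_add[of "x - y" n \<alpha> \<beta> \<gamma> "x' - y'"] by (simp add: algebra_simps del: plus_fun_apply)

lemma hcong_psmult: "x \<approx> y \<Longrightarrow> psmult c x \<approx> psmult c y"
  unfolding hcong_def using relideal_psmult by (fastforce simp: psmult_diff[symmetric])

lemma hcong_sum: "(\<And>j. j \<in> J \<Longrightarrow> f j \<approx> g j) \<Longrightarrow> sum f J \<approx> sum g J"
  by (induction J rule: infinite_finite_induct) (simp_all add: hcong_add del: sum_fun_apply plus_fun_apply)

lemma hcong_pmult_right: "x \<approx> y \<Longrightarrow> z \<in> pathalg n \<Longrightarrow> pmult n x z \<approx> pmult n y z"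
  unfolding hcong_def using relideal_pmult_right by (fastforce simp: pmult_diff_left[symmetric])

lemma hcong_pmult_left: "x \<approx> y \<Longrightarrow> z \<in> pathalg n \<Longrightarrow> pmult n z x \<approx> pmult n z y"
  unfolding hcong_def using relideal_pmult_left by (fastforce simp: pmult_diff_right[symmetric])

lemma hcong_rel1:
  assumes "i < n" "s < n" "valid_from n s P" "path_tgt n s P = i" "valid_from n (minc n i) Q"
  shows "pth (s, P @ [D (mdec n i), U (mdec n i), U i] @ Q)
    \<approx> psmult (\<alpha> i) (pth (s, P @ [U i, D i, U i] @ Q))
      + psmult (\<beta> i) (pth (s, P @ [U i, U (minc n i), D (minc n i)] @ Q))
      + psmult (\<gamma> i) (pth (s, P @ [U i] @ Q))"
proof -
  have mem: "pmult n (pmult n (pth (s, P)) (rel1 n \<alpha> \<beta> \<gamma> i)) (pth (minc n i, Q)) \<in> relideal n \<alpha> \<beta> \<gamma>"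
    using assms by (intro relideal_generator disjI1 refl) (simp_all add: path_ok_def)
  have "pmult n (pmult n (pth (s, P)) (rel1 n \<alpha> \<beta> \<gamma> i)) (pth (minc n i, Q))
    = pth (s, P @ [D (mdec n i), U (mdec n i), U i] @ Q)
    - psmult (\<alpha> i) (pth (s, P @ [U i, D i, U i] @ Q))
    - psmult (\<beta> i) (pth (s, P @ [U i, U (minc n i), D (minc n i)] @ Q))
    - psmult (\<gamma> i) (pth (s, P @ [U i] @ Q))"
    unfolding rel1_eq pmult_diff_left pmult_diff_right pmult_psmult_left pmult_psmult_right pmult_pth_pth_pth
    using assms by simp
  with mem show ?thesis
    unfolding hcong_def by (simp only: diff_diff_eq add.assoc)
qed

lemma hcong_rel2:
  assumes "i < n" "s < n" "valid_from n s P" "path_tgt n s P = minc n i" "valid_from n i Q"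
  shows "pth (s, P @ [D i, D (mdec n i), U (mdec n i)] @ Q)
    \<approx> psmult (\<alpha> i) (pth (s, P @ [D i, U i, D i] @ Q))
      + psmult (\<beta> i) (pth (s, P @ [U (minc n i), D (minc n i), D i] @ Q))
      + psmult (\<gamma> i) (pth (s, P @ [D i] @ Q))"
proof -
  have mem: "pmult n (pmult n (pth (s, P)) (rel2 n \<alpha> \<beta> \<gamma> i)) (pth (i, Q)) \<in> relideal n \<alpha> \<beta> \<gamma>"
    using assms by (intro relideal_generator disjI2 refl) (simp_all add: path_ok_def)
  have "pmult n (pmult n (pth (s, P)) (rel2 n \<alpha> \<beta> \<gamma> i)) (pth (i, Q))
    = pth (s, P @ [D i, D (mdec n i), U (mdec n i)] @ Q)
    - psmult (\<alpha> i) (pth (s, P @ [D i, U i, D i] @ Q))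
    - psmult (\<beta> i) (pth (s, P @ [U (minc n i), D (minc n i), D i] @ Q))
    - psmult (\<gamma> i) (pth (s, P @ [D i] @ Q))"
    unfolding rel2_eq pmult_diff_left pmult_diff_right pmult_psmult_left pmult_psmult_right pmult_pth_pth_pth
    using assms by simp
  with mem show ?thesis
    unfolding hcong_def by (simp only: diff_diff_eq add.assoc)
qed

lemma valid_loopX: "v < n \<Longrightarrow> valid_from n v (loopX n v) \<and> path_tgt n v (loopX n v) = v"
  by (simp add: loopX_def)

lemma valid_loopY: "v < n \<Longrightarrow> valid_from n v (loopY n v) \<and> path_tgt n v (loopY n v) = v"
  by (simp add: loopY_def)

lemma valid_loop_power:
  "valid_from n v w \<and> path_tgt n v w = v \<Longrightarrow> valid_from n v (concat (replicate a w)) \<and> path_tgt n v (concat (replicate a w)) = v"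
  by (induction a) (simp_all add: valid_from_append path_tgt_append)

lemma valid_monomial_path:
  "v < n \<Longrightarrow> valid_from n v (monomial_path n v a b) \<and> path_tgt n v (monomial_path n v a b) = v"
  using valid_loop_power[OF valid_loopX] valid_loop_power[OF valid_loopY]
  by (simp add: monomial_path_def valid_from_append path_tgt_append)

lemma word_poly_twist_power:
  "\<tau> w = id \<Longrightarrow> \<phi> (concat (replicate a w)) = \<phi> w ^ a \<and> \<tau> (concat (replicate a w)) = id"
  by (induction a) (simp_all add: word_poly_append word_twist_append fun_eq_iff)

lemma word_poly_monomial_path: "v < n \<Longrightarrow> \<phi> (monomial_path n v a b) = bX ^ a * bY ^ b"
  and word_twist_monomial_path: "v < n \<Longrightarrow> \<tau> (monomial_path n v a b) = id"
proof -
  assume v: "v < n"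
  have "\<phi> (loopX n v) = bX" "\<tau> (loopX n v) = id" "\<phi> (loopY n v) = bY" "\<tau> (loopY n v) = id"
    using v by (simp_all add: loopX_def loopY_def sigma_inv_sigma sigma_sigma_inv beta_nonzero fun_eq_iff)
  then show "\<phi> (monomial_path n v a b) = bX ^ a * bY ^ b" "\<tau> (monomial_path n v a b) = id"
    using word_poly_twist_power by (simp_all add: monomial_path_def word_poly_append word_twist_append fun_eq_iff)
qed

lemma poly_at_in_pathalg: "v < n \<Longrightarrow> poly_at n v f \<in> pathalg n"
  unfolding poly_at_def split_beta
  by (intro pathalg_sum pathalg_psmult pth_in_pathalg) (simp add: path_ok_def valid_monomial_path)

lemma poly_at_pmult_pth:
  "v < n \<Longrightarrow> pmult n (poly_at n v f) (pth (v, w))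
    = (\<Sum>(a, b)\<in>bsupp f. psmult (bcoeff f a b) (pth (v, monomial_path n v a b @ w)))"
  unfolding poly_at_def pmult_sum_left pmult_psmult_left split_beta
  by (intro sum.cong refl) (simp add: pmult_pth_pth valid_monomial_path)

lemma Phi_poly_at_pmult_pth:
  assumes "v < n"
  shows "\<Phi> (pmult n (poly_at n v f) (pth (v, w))) v M = (if word_deg w = M then f * \<phi> w else 0)"
proof -
  have "\<Phi> (pmult n (poly_at n v f) (pth (v, w))) v M
      = (\<Sum>(a, b)\<in>bsupp f. bconst (bcoeff f a b) * (if word_deg w = M then bX ^ a * bY ^ b * \<phi> w else 0))"
    unfolding poly_at_pmult_pth[OF assms]
    by (simp add: Phi_sum Phi_psmult Phi_pth fin_supp_psmult split_beta word_deg_append word_poly_append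
        word_poly_monomial_path[OF assms] word_twist_monomial_path[OF assms] cong: if_cong)
  also have "\<dots> = (if word_deg w = M then (\<Sum>(a, b)\<in>bsupp f. bconst (bcoeff f a b) * bX ^ a * bY ^ b) * \<phi> w else 0)"
    by (simp add: sum_distrib_right split_beta mult.assoc)
  also have "\<dots> = (if word_deg w = M then f * \<phi> w else 0)"
    by (simp flip: bipoly_expand[OF finite_bsupp order_refl])
  finally show ?thesis .
qed

lemma hcong_swap_loops:
  assumes v: "v < n" and s: "s < n" and P: "valid_from n s P" "path_tgt n s P = v" and Q: "valid_from n v Q"
  shows "pth (s, P @ loopY n v @ loopX n v @ Q) \<approx> pth (s, P @ loopX n v @ loopY n v @ Q)"
proof -
  have "valid_from n (minc n v) (D v # Q)" "valid_from n s (P @ [U v])" "path_tgt n s (P @ [U v]) = minc n v"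
    using v P Q by (simp_all add: valid_from_append path_tgt_append)
  \<comment> \<open>the two relations rewrite \<open>y x\<close> and \<open>x y\<close> to the same combination\<close>
  from hcong_rel1[OF v s P this(1)] hcong_rel2[OF v s this(2,3) Q]
  show ?thesis
    unfolding loopX_def loopY_def append_assoc append_Cons append_Nil by (metis hcong_sym hcong_trans)
qed

lemma hcong_swap_loopY_power:
  assumes v: "v < n" and s: "s < n" and P: "valid_from n s P" "path_tgt n s P = v" and Q: "valid_from n v Q"
  shows "pth (s, P @ concat (replicate b (loopY n v)) @ loopX n v @ Q)
    \<approx> pth (s, P @ loopX n v @ concat (replicate b (loopY n v)) @ Q)"
  using P
proof (induction b arbitrary: P)
  case (Suc b)
  have "valid_from n s (P @ loopY n v)" "path_tgt n s (P @ loopY n v) = v"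
    using Suc.prems valid_loopY[OF v] by (simp_all add: valid_from_append path_tgt_append)
  from Suc.IH[OF this]
  have "pth (s, P @ loopY n v @ concat (replicate b (loopY n v)) @ loopX n v @ Q)
      \<approx> pth (s, P @ loopY n v @ loopX n v @ concat (replicate b (loopY n v)) @ Q)"
    by (simp only: append_assoc)
  moreover have "valid_from n v (concat (replicate b (loopY n v)) @ Q)"
    using Q valid_loop_power[OF valid_loopY[OF v]] by (simp add: valid_from_append)
  from hcong_swap_loops[OF v s Suc.prems this]
  have "pth (s, P @ loopY n v @ loopX n v @ concat (replicate b (loopY n v)) @ Q)
      \<approx> pth (s, P @ loopX n v @ loopY n v @ concat (replicate b (loopY n v)) @ Q)" .
  ultimately show ?case
    unfolding replicate_Suc concat.simps append_assoc by (rule hcong_trans)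
qed simp

lemma hcong_swap_loop_powers:
  assumes v: "v < n" and s: "s < n" and P: "valid_from n s P" "path_tgt n s P = v" and Q: "valid_from n v Q"
  shows "pth (s, P @ concat (replicate b (loopY n v)) @ concat (replicate c (loopX n v)) @ Q)
    \<approx> pth (s, P @ concat (replicate c (loopX n v)) @ concat (replicate b (loopY n v)) @ Q)"
  using P
proof (induction c arbitrary: P)
  case (Suc c)
  have "valid_from n v (concat (replicate c (loopX n v)) @ Q)"
    using Q valid_loop_power[OF valid_loopX[OF v]] by (simp add: valid_from_append)
  from hcong_swap_loopY_power[OF v s Suc.prems this]
  have "pth (s, P @ concat (replicate b (loopY n v)) @ loopX n v @ concat (replicate c (loopX n v)) @ Q)
      \<approx> pth (s, P @ loopX n v @ concat (replicate b (loopY n v)) @ concat (replicate c (loopX n v)) @ Q)" .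
  moreover have "valid_from n s (P @ loopX n v)" "path_tgt n s (P @ loopX n v) = v"
    using Suc.prems valid_loopX[OF v] by (simp_all add: valid_from_append path_tgt_append)
  from Suc.IH[OF this]
  have "pth (s, P @ loopX n v @ concat (replicate b (loopY n v)) @ concat (replicate c (loopX n v)) @ Q)
      \<approx> pth (s, P @ loopX n v @ concat (replicate c (loopX n v)) @ concat (replicate b (loopY n v)) @ Q)"
    by (simp only: append_assoc)
  ultimately show ?case
    unfolding replicate_Suc concat.simps append_assoc by (rule hcong_trans)
qed simp

lemma pth_monomial_path_append:
  assumes v: "v < n"
  shows "pth (v, monomial_path n v a b @ monomial_path n v c d) \<approx> pth (v, monomial_path n v (a + c) (b + d))"
proof -
  have P: "valid_from n v (concat (replicate a (loopX n v)))"
    "path_tgt n v (concat (replicate a (loopX n v))) = v"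
    using valid_loop_power[OF valid_loopX[OF v]] by simp_all
  have Q: "valid_from n v (concat (replicate d (loopY n v)))"
    using valid_loop_power[OF valid_loopY[OF v]] by simp
  show ?thesis
    using hcong_swap_loop_powers[OF v v P Q, of b c]
    by (simp only: monomial_path_def replicate_add concat_append append_assoc)
qed

lemma poly_at_mult:
  assumes v: "v < n"
  shows "pmult n (poly_at n v f) (poly_at n v g) \<approx> poly_at n v (f * g)"
proof -
  define S where "S = bsupp f \<times> bsupp g"
  define c where "c x = bcoeff f (fst (fst x)) (snd (fst x)) * bcoeff g (fst (snd x)) (snd (snd x))" for x
  have "f * g = (\<Sum>(a, b)\<in>bsupp f. bconst (bcoeff f a b) * bX ^ a * bY ^ b)
      * (\<Sum>(a, b)\<in>bsupp g. bconst (bcoeff g a b) * bX ^ a * bY ^ b)"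
    by (simp flip: bipoly_expand[OF finite_bsupp order_refl])
  then have fg: "f * g = (\<Sum>x\<in>S. bconst (c x) * bX ^ (fst (fst x) + fst (snd x)) * bY ^ (snd (fst x) + snd (snd x)))"
    by (simp add: S_def c_def sum_product sum.cartesian_product split_beta bconst_mult power_add ac_simps)
  have "pmult n (poly_at n v f) (poly_at n v g) = (\<Sum>x\<in>S. psmult (c x)
      (pth (v, monomial_path n v (fst (fst x)) (snd (fst x)) @ monomial_path n v (fst (snd x)) (snd (snd x)))))"
    unfolding poly_at_def pmult_sum_left
    unfolding pmult_sum_right pmult_psmult_left pmult_psmult_right
    by (simp add: S_def c_def pmult_psmult_left pmult_psmult_right pmult_pth_pth valid_monomial_path[OF v]
        psmult_psmult split_beta sum.cartesian_product mult.commute)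
  also have "\<dots> \<approx> (\<Sum>x\<in>S. psmult (c x)
      (pth (v, monomial_path n v (fst (fst x) + fst (snd x)) (snd (fst x) + snd (snd x)))))"
    by (intro hcong_sum hcong_psmult pth_monomial_path_append[OF v])
  also have "\<dots> = poly_at n v (f * g)"
    by (simp add: fg poly_at_sum poly_at_monomial)
  finally show ?thesis .
qed

lemma pth_Nil_pmult_poly_at: "pmult n (pth (v, [])) (poly_at n v g) = poly_at n v g"
  unfolding poly_at_def pmult_sum_right pmult_psmult_right split_beta
  by (intro sum.cong refl) (simp add: pmult_pth_pth)

lemma poly_at_pmult_pth_Nil: "v < n \<Longrightarrow> pmult n (poly_at n v g) (pth (v, [])) = poly_at n v g"
  unfolding poly_at_def pmult_sum_left pmult_psmult_left split_beta
  by (intro sum.cong refl) (simp add: pmult_pth_pth valid_monomial_path)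

lemma hcong_commute_mult:
  assumes s: "s < n" and t: "t < n" and e: "e \<in> pathalg n"
    and f: "pmult n e (poly_at n t f) \<approx> pmult n (poly_at n s f') e"
    and g: "pmult n e (poly_at n t g) \<approx> pmult n (poly_at n s g') e"
  shows "pmult n e (poly_at n t (f * g)) \<approx> pmult n (poly_at n s (f' * g')) e"
proof -
  have "pmult n e (poly_at n t (f * g)) \<approx> pmult n e (pmult n (poly_at n t f) (poly_at n t g))"
    by (rule hcong_pmult_left[OF hcong_sym[OF poly_at_mult[OF t]] e])
  also have "pmult n e (pmult n (poly_at n t f) (poly_at n t g)) \<approx> pmult n (pmult n (poly_at n s f') e) (poly_at n t g)"
    unfolding pmult_assoc[symmetric] by (rule hcong_pmult_right[OF f poly_at_in_pathalg[OF t]])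
  also have "pmult n (pmult n (poly_at n s f') e) (poly_at n t g) \<approx> pmult n (poly_at n s f') (pmult n (poly_at n s g') e)"
    unfolding pmult_assoc by (rule hcong_pmult_left[OF g poly_at_in_pathalg[OF s]])
  also have "pmult n (poly_at n s f') (pmult n (poly_at n s g') e) \<approx> pmult n (poly_at n s (f' * g')) e"
    unfolding pmult_assoc[symmetric] by (rule hcong_pmult_right[OF poly_at_mult[OF s] e])
  finally show ?thesis .
qed

lemma hcong_solve:
  assumes "x \<approx> psmult a y + psmult b z + psmult c w" "b \<noteq> 0"
  shows "z \<approx> psmult (inverse b) (x - psmult a y - psmult c w)"
proof -
  have "psmult (- inverse b) (x - (psmult a y + psmult b z + psmult c w)) \<in> relideal n \<alpha> \<beta> \<gamma>"
    using relideal_psmult assms(1) unfolding hcong_def by blast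
  moreover have "psmult (- inverse b) (x - (psmult a y + psmult b z + psmult c w))
      = z - psmult (inverse b) (x - psmult a y - psmult c w)"
    using assms(2) by (auto simp: fun_eq_iff field_simps)
  ultimately show ?thesis
    by (simp add: hcong_def)
qed

lemma D_poly_at_commute:
  assumes j: "j < n"
  shows "pmult n (pth (minc n j, [D j])) (poly_at n j g) \<approx> pmult n (poly_at n (minc n j) (\<sigma> j g)) (pth (minc n j, [D j]))"
proof -
  have const: "pmult n (pth (minc n j, [D j])) (poly_at n j (bconst c)) \<approx> pmult n (poly_at n (minc n j) (\<sigma> j (bconst c))) (pth (minc n j, [D j]))" for c
  proof -
    have "pmult n (pth (minc n j, [D j])) (poly_at n j (bconst c)) = psmult c (pth (minc n j, [D j]))"
      "pmult n (poly_at n (minc n j) (\<sigma> j (bconst c))) (pth (minc n j, [D j])) = psmult c (pth (minc n j, [D j]))"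
      by (simp_all add: poly_at_bconst pmult_psmult_left pmult_psmult_right pmult_pth_pth_eq)
    then show ?thesis
      by (simp only: hcong_refl)
  qed
  have X: "pmult n (pth (minc n j, [D j])) (poly_at n j bX) \<approx> pmult n (poly_at n (minc n j) (\<sigma> j bX)) (pth (minc n j, [D j]))"
    by (simp add: poly_at_bX poly_at_bY pmult_pth_pth j loopX_def loopY_def)
  have "pth (minc n j, [] @ [D j, D (mdec n j), U (mdec n j)] @ [])
      \<approx> psmult (\<alpha> j) (pth (minc n j, [] @ [D j, U j, D j] @ []))
        + psmult (\<beta> j) (pth (minc n j, [] @ [U (minc n j), D (minc n j), D j] @ []))
        + psmult (\<gamma> j) (pth (minc n j, [] @ [D j] @ []))"
    by (rule hcong_rel2[OF j]) simp_all
  then have Y: "pmult n (pth (minc n j, [D j])) (poly_at n j bY) \<approx> pmult n (poly_at n (minc n j) (\<sigma> j bY)) (pth (minc n j, [D j]))"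
    by (simp add: sigma_bY poly_at_add poly_at_bconst_mult poly_at_bX poly_at_bY poly_at_bconst pmult_add_left
        pmult_psmult_left pmult_pth_pth j loopX_def loopY_def del: plus_fun_apply)
  show ?thesis
  proof (induction g rule: bipoly_induct)
    case (add f g)
    then show ?case
      unfolding sigma_add poly_at_add pmult_add_left pmult_add_right by (rule hcong_add)
  next
    case (mult f g)
    have "pth (minc n j, [D j]) \<in> pathalg n"
      using j by (simp add: pth_in_pathalg path_ok_def)
    from hcong_commute_mult[OF minc_less j this mult] show ?case
      unfolding sigma_mult .
  qed (fact const X Y)+
qed

lemma U_poly_at_commute:
  assumes j: "j < n"
  shows "pmult n (pth (j, [U j])) (poly_at n (minc n j) g) \<approx> pmult n (poly_at n j (\<sigma>' j g)) (pth (j, [U j]))"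
proof -
  have const: "pmult n (pth (j, [U j])) (poly_at n (minc n j) (bconst c)) \<approx> pmult n (poly_at n j (\<sigma>' j (bconst c))) (pth (j, [U j]))" for c
  proof -
    have "pmult n (pth (j, [U j])) (poly_at n (minc n j) (bconst c)) = psmult c (pth (j, [U j]))"
      "pmult n (poly_at n j (\<sigma>' j (bconst c))) (pth (j, [U j])) = psmult c (pth (j, [U j]))"
      by (simp_all add: poly_at_bconst pmult_psmult_left pmult_psmult_right pmult_pth_pth_eq)
    then show ?thesis
      by (simp only: hcong_refl)
  qed
  have "pth (j, [] @ [D (mdec n j), U (mdec n j), U j] @ [])
      \<approx> psmult (\<alpha> j) (pth (j, [] @ [U j, D j, U j] @ []))
        + psmult (\<beta> j) (pth (j, [] @ [U j, U (minc n j), D (minc n j)] @ []))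
        + psmult (\<gamma> j) (pth (j, [] @ [U j] @ []))"
    by (rule hcong_rel1[OF j j]) simp_all
  from hcong_solve[OF this[unfolded append_Nil append_Nil2] beta_nonzero[OF j]]
  have "pth (j, [U j, U (minc n j), D (minc n j)])
      \<approx> psmult (inverse (\<beta> j)) (pth (j, [D (mdec n j), U (mdec n j), U j])
          - psmult (\<alpha> j) (pth (j, [U j, D j, U j])) - psmult (\<gamma> j) (pth (j, [U j])))" .
  then have X: "pmult n (pth (j, [U j])) (poly_at n (minc n j) bX) \<approx> pmult n (poly_at n j (\<sigma>' j bX)) (pth (j, [U j]))"
    by (simp add: sigma_inv_bX poly_at_diff poly_at_bconst_mult poly_at_bX poly_at_bY poly_at_bconst pmult_diff_left
        pmult_psmult_left pmult_pth_pth j loopX_def loopY_def)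
  have Y: "pmult n (pth (j, [U j])) (poly_at n (minc n j) bY) \<approx> pmult n (poly_at n j (\<sigma>' j bY)) (pth (j, [U j]))"
    by (simp add: poly_at_bX poly_at_bY pmult_pth_pth j loopX_def loopY_def)
  show ?thesis
  proof (induction g rule: bipoly_induct)
    case (add f g)
    then show ?case
      unfolding sigma_inv_add poly_at_add pmult_add_left pmult_add_right by (rule hcong_add)
  next
    case (mult f g)
    have "pth (j, [U j]) \<in> pathalg n"
      using j by (simp add: pth_in_pathalg path_ok_def)
    from hcong_commute_mult[OF j minc_less this mult] show ?case
      unfolding sigma_inv_mult .
  qed (fact const X Y)+
qed

lemma arrow_poly_at_commute:
  assumes "valid_from n v [a]"
  shows "pmult n (pth (v, [a])) (poly_at n (arr_tgt n a) g) \<approx> pmult n (poly_at n v (\<tau> [a] g)) (pth (v, [a]))"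
proof (cases a)
  case (U j)
  with assms D_poly_at_commute U_poly_at_commute[of j g] show ?thesis by auto
next
  case (D j)
  with assms D_poly_at_commute[of j g] show ?thesis by auto
qed

lemma pth_poly_at_commute:
  assumes "v < n" "valid_from n v w"
  shows "pmult n (pth (v, w)) (poly_at n (path_tgt n v w) g) \<approx> pmult n (poly_at n v (\<tau> w g)) (pth (v, w))"
  using assms
proof (induction w arbitrary: v)
  case Nil
  have "pmult n (pth (v, [])) (poly_at n v g) \<approx> pmult n (poly_at n v g) (pth (v, []))"
    using Nil.prems(1) by (simp add: pth_Nil_pmult_poly_at poly_at_pmult_pth_Nil)
  then show ?case
    by (simp only: path_tgt.simps word_twist.simps)
next
  case (Cons a w)
  define t where "t = arr_tgt n a"
  have a: "valid_from n v [a]" and w: "valid_from n t w" and t: "t < n"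
    using Cons.prems by (auto simp: t_def intro: path_tgt_less[of v n "[a]", simplified])
  have split: "pth (v, a # w) = pmult n (pth (v, [a])) (pth (t, w))"
    by (simp add: pmult_pth_pth t_def)
  have "pmult n (pth (v, a # w)) (poly_at n (path_tgt n v (a # w)) g)
      = pmult n (pth (v, [a])) (pmult n (pth (t, w)) (poly_at n (path_tgt n t w) g))"
    by (simp add: split pmult_assoc t_def)
  also have "\<dots> \<approx> pmult n (pth (v, [a])) (pmult n (poly_at n t (\<tau> w g)) (pth (t, w)))"
    by (rule hcong_pmult_left[OF Cons.IH[OF t w] pth_in_pathalg]) (use a Cons.prems(1) in \<open>simp add: path_ok_def\<close>)
  also have "\<dots> = pmult n (pmult n (pth (v, [a])) (poly_at n (arr_tgt n a) (\<tau> w g))) (pth (t, w))"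
    by (simp add: pmult_assoc t_def)
  also have "\<dots> \<approx> pmult n (pmult n (poly_at n v (\<tau> [a] (\<tau> w g))) (pth (v, [a]))) (pth (t, w))"
    using arrow_poly_at_commute[OF a] t w by (intro hcong_pmult_right pth_in_pathalg) (auto simp: path_ok_def)
  also have "\<dots> = pmult n (poly_at n v (\<tau> (a # w) g)) (pth (v, a # w))"
    by (simp add: split pmult_assoc word_twist_append[of _ _ _ "[a]" w, simplified])
  finally show ?case .
qed

lemma poly_at_pmult_pth_pmult_poly_at:
  assumes v: "v < n" and w: "valid_from n v w"
  shows "pmult n (pmult n (poly_at n v f) (pth (v, w))) (poly_at n (path_tgt n v w) g)
    \<approx> pmult n (poly_at n v (f * \<tau> w g)) (pth (v, w))"
proof -
  have "pmult n (pmult n (poly_at n v f) (pth (v, w))) (poly_at n (path_tgt n v w) g)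
      \<approx> pmult n (poly_at n v f) (pmult n (poly_at n v (\<tau> w g)) (pth (v, w)))"
    unfolding pmult_assoc by (rule hcong_pmult_left[OF pth_poly_at_commute[OF v w] poly_at_in_pathalg[OF v]])
  also have "\<dots> \<approx> pmult n (poly_at n v (f * \<tau> w g)) (pth (v, w))"
    unfolding pmult_assoc[symmetric] using v w
    by (intro hcong_pmult_right[OF poly_at_mult] pth_in_pathalg) (simp_all add: path_ok_def)
  finally show ?thesis .
qed

lemma poly_at_pmult_pth_loops:
  assumes v: "v < n" and w: "valid_from n v w"
  shows "pmult n (poly_at n v f) (pth (v, w @ loopX n (path_tgt n v w)))
      \<approx> pmult n (poly_at n v (f * \<tau> w bX)) (pth (v, w))"
    and "pmult n (poly_at n v f) (pth (v, w @ loopY n (path_tgt n v w)))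
      \<approx> pmult n (poly_at n v (f * \<tau> w bY)) (pth (v, w))"
proof -
  have "(pth (v, w @ loopX n (path_tgt n v w)) :: path \<Rightarrow> 'k) = pmult n (pth (v, w)) (poly_at n (path_tgt n v w) bX)"
    "(pth (v, w @ loopY n (path_tgt n v w)) :: path \<Rightarrow> 'k) = pmult n (pth (v, w)) (poly_at n (path_tgt n v w) bY)"
    by (simp_all add: poly_at_bX poly_at_bY pmult_pth_pth_eq)
  then show "pmult n (poly_at n v f) (pth (v, w @ loopX n (path_tgt n v w)))
      \<approx> pmult n (poly_at n v (f * \<tau> w bX)) (pth (v, w))"
    and "pmult n (poly_at n v f) (pth (v, w @ loopY n (path_tgt n v w)))
      \<approx> pmult n (poly_at n v (f * \<tau> w bY)) (pth (v, w))"
    by (simp_all only: pmult_assoc[symmetric] poly_at_pmult_pth_pmult_poly_at[OF v w])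
qed

definition has_normal_form :: "nat \<Rightarrow> (path \<Rightarrow> 'k) \<Rightarrow> bool" where
  "has_normal_form v x \<longleftrightarrow> (\<exists>F G K. (\<forall>m\<ge>K. F m = 0 \<and> G m = 0) \<and> x \<approx> normal_form n v F G K)"

lemma has_normal_form_hcong: "x \<approx> y \<Longrightarrow> has_normal_form v y \<Longrightarrow> has_normal_form v x"
  unfolding has_normal_form_def using hcong_trans by blast

lemma has_normal_form_0: "has_normal_form v 0"
  unfolding has_normal_form_def
  by (rule exI[of _ "\<lambda>_. 0"], rule exI[of _ "\<lambda>_. 0"], rule exI[of _ 0]) (simp add: normal_form_def)

lemma has_normal_form_add:
  assumes "has_normal_form v x" "has_normal_form v y"
  shows "has_normal_form v (x + y)"
proof -
  obtain F G K where FG: "\<forall>m\<ge>K. F m = 0 \<and> G m = 0" "x \<approx> normal_form n v F G K"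
    using assms(1) has_normal_form_def by blast
  obtain F' G' K' where FG': "\<forall>m\<ge>K'. F' m = 0 \<and> G' m = 0" "y \<approx> normal_form n v F' G' K'"
    using assms(2) has_normal_form_def by blast
  define L where "L = max K K'"
  have "x + y \<approx> normal_form n v F G L + normal_form n v F' G' L"
    unfolding L_def normal_form_extend[OF FG(1) max.cobounded1] normal_form_extend[OF FG'(1) max.cobounded2]
    by (rule hcong_add[OF FG(2) FG'(2)])
  moreover have "\<forall>m\<ge>L. F m + F' m = 0 \<and> G m + G' m = 0"
    using FG(1) FG'(1) by (simp add: L_def)
  ultimately show ?thesis
    unfolding has_normal_form_def normal_form_add by (intro exI conjI)
qed

lemma has_normal_form_psmult:
  assumes "has_normal_form v x"
  shows "has_normal_form v (psmult c x)"
proof -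
  obtain F G K where FG: "\<forall>m\<ge>K. F m = 0 \<and> G m = 0" "x \<approx> normal_form n v F G K"
    using assms has_normal_form_def by blast
  then have "psmult c x \<approx> normal_form n v (\<lambda>m. bconst c * F m) (\<lambda>m. bconst c * G m) K"
    "\<forall>m\<ge>K. bconst c * F m = 0 \<and> bconst c * G m = 0"
    by (simp_all add: hcong_psmult flip: normal_form_psmult)
  then show ?thesis
    unfolding has_normal_form_def by (intro exI conjI)
qed

lemma has_normal_form_sum: "(\<And>j. j \<in> J \<Longrightarrow> has_normal_form v (f j)) \<Longrightarrow> has_normal_form v (sum f J)"
proof (induction J rule: infinite_finite_induct)
  case (insert j J)
  then show ?case by (simp add: has_normal_form_add del: sum_fun_apply plus_fun_apply)
qed (simp_all add: has_normal_form_0)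

lemma has_normal_form_down_term: "has_normal_form v (pmult n (poly_at n v f) (pth (v, down_path n v m)))"
proof -
  have "normal_form n v (\<lambda>k. if k = m then f else 0) (\<lambda>_. 0) (Suc m)
      = pmult n (poly_at n v f) (pth (v, down_path n v m))"
    unfolding normal_form_def by (simp add: sum.delta' lambda_zero_eq_zero)
  then show ?thesis
    unfolding has_normal_form_def by (intro exI[of _ "\<lambda>k. if k = m then f else 0"] exI[of _ "\<lambda>_. 0"] exI[of _ "Suc m"]) simp
qed

lemma has_normal_form_up_term: "has_normal_form v (pmult n (poly_at n v f) (pth (v, up_path n v m)))"
proof -
  have "normal_form n v (\<lambda>_. 0) (\<lambda>k. if k = m then f else 0) (Suc m)
      = pmult n (poly_at n v f) (pth (v, up_path n v m))"
    unfolding normal_form_def by (simp add: sum.delta' lambda_zero_eq_zero)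
  then show ?thesis
    unfolding has_normal_form_def by (intro exI[of _ "\<lambda>_. 0"] exI[of _ "\<lambda>k. if k = m then f else 0"] exI[of _ "Suc m"]) simp
qed

lemma valid_arrow_cases:
  assumes "valid_from n t [a]"
  obtains (D) j where "a = D j" "j < n" "t = minc n j" | (U) "a = U t" "t < n"
  using assms by (cases a) auto

lemma has_normal_form_down_arrow:
  assumes v: "v < n" and a: "valid_from n t [a]"
  shows "has_normal_form v (pmult n (pmult n (poly_at n v f) (pth (v, down_path n v m))) (pth (t, [a])))"
proof (cases "t = down_end n v m")
  case False
  then have "pmult n (pth (v, down_path n v m)) (pth (t, [a])) = (0 :: path \<Rightarrow> 'k)"
    using valid_down_path[OF v] by (simp add: pmult_pth_pth)
  then show ?thesis
    unfolding pmult_assoc by (simp only: pmult_zero has_normal_form_0)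
next
  case True
  then have prod: "pmult n (pmult n (poly_at n v f) (pth (v, down_path n v m))) (pth (t, [a]))
      = pmult n (poly_at n v f) (pth (v, down_path n v m @ [a]))"
    using valid_down_path[OF v] by (simp add: pmult_assoc pmult_pth_pth)
  from a show ?thesis
  proof (cases rule: valid_arrow_cases)
    case (D j)
    then have "down_path n v m @ [a] = down_path n v (Suc m)"
      using True by (simp add: down_path_snoc del: down_path.simps)
    then show ?thesis
      unfolding prod by (simp only: has_normal_form_down_term)
  next
    case U
    show ?thesis
    proof (cases m)
      case 0
      then have "down_path n v m @ [a] = up_path n v 1"
        using U True by simp
      then show ?thesis
        unfolding prod by (simp only: has_normal_form_up_term)
    next
      case (Suc k)
      have "down_path n v m @ [a] = down_path n v k @ loopY n (path_tgt n v (down_path n v k))"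
        using Suc U True valid_down_path[OF v]
        by (simp add: down_path_snoc down_end_Suc loopY_def del: down_path.simps down_end.simps)
      then show ?thesis
        unfolding prod using valid_down_path[OF v]
        by (metis poly_at_pmult_pth_loops(2)[OF v] has_normal_form_hcong has_normal_form_down_term)
    qed
  qed
qed

lemma has_normal_form_up_arrow:
  assumes v: "v < n" and a: "valid_from n t [a]"
  shows "has_normal_form v (pmult n (pmult n (poly_at n v f) (pth (v, up_path n v m))) (pth (t, [a])))"
proof (cases "t = up_end n v m")
  case False
  then have "pmult n (pth (v, up_path n v m)) (pth (t, [a])) = (0 :: path \<Rightarrow> 'k)"
    using valid_up_path[OF v] by (simp add: pmult_pth_pth)
  then show ?thesis
    unfolding pmult_assoc by (simp only: pmult_zero has_normal_form_0)
next
  case True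
  then have prod: "pmult n (pmult n (poly_at n v f) (pth (v, up_path n v m))) (pth (t, [a]))
      = pmult n (poly_at n v f) (pth (v, up_path n v m @ [a]))"
    using valid_up_path[OF v] by (simp add: pmult_assoc pmult_pth_pth)
  from a show ?thesis
  proof (cases rule: valid_arrow_cases)
    case U
    then have "up_path n v m @ [a] = up_path n v (Suc m)"
      using True by (simp add: up_path_snoc del: up_path.simps)
    then show ?thesis
      unfolding prod by (simp only: has_normal_form_up_term)
  next
    case (D j)
    show ?thesis
    proof (cases m)
      case 0
      then have "up_path n v m @ [a] = down_path n v 1"
        using D True by simp
      then show ?thesis
        unfolding prod by (simp only: has_normal_form_down_term)
    next
      case (Suc k)
      have "j = up_end n v k"
        using D(2,3) True Suc valid_up_path[OF v] by (metis mdec_minc up_end_Suc)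
      then have "up_path n v m @ [a] = up_path n v k @ loopX n (path_tgt n v (up_path n v k))"
        using Suc D(1) valid_up_path[OF v] by (simp add: up_path_snoc loopX_def del: up_path.simps)
      then show ?thesis
        unfolding prod using valid_up_path[OF v]
        by (metis poly_at_pmult_pth_loops(1)[OF v] has_normal_form_hcong has_normal_form_up_term)
    qed
  qed
qed

lemma has_normal_form_pth: "v < n \<Longrightarrow> valid_from n v w \<Longrightarrow> has_normal_form v (pth (v, w))"
proof (induction w rule: rev_induct)
  case Nil
  have "(pth (v, []) :: path \<Rightarrow> 'k) = pmult n (poly_at n v 1) (pth (v, down_path n v 0))"
    by (simp add: poly_at_1 pmult_pth_pth)
  then show ?case
    by (simp only: has_normal_form_down_term)
next
  case (snoc a w)
  define t where "t = path_tgt n v w"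
  have w: "valid_from n v w" and a: "valid_from n t [a]"
    using snoc.prems(2) by (simp_all add: valid_from_append t_def)
  have t: "t < n"
    unfolding t_def by (rule path_tgt_less[OF snoc.prems(1) w])
  obtain F G K where FG: "pth (v, w) \<approx> normal_form n v F G K"
    using snoc.IH[OF snoc.prems(1) w] has_normal_form_def by blast
  have "pth (v, w @ [a]) = pmult n (pth (v, w)) (pth (t, [a]))"
    by (simp add: pmult_pth_pth t_def)
  also have "\<dots> \<approx> pmult n (normal_form n v F G K) (pth (t, [a]))"
    using t a by (intro hcong_pmult_right[OF FG] pth_in_pathalg) (simp add: path_ok_def)
  finally have "pth (v, w @ [a]) \<approx> pmult n (normal_form n v F G K) (pth (t, [a]))" .
  moreover have "has_normal_form v (pmult n (normal_form n v F G K) (pth (t, [a])))"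
    unfolding normal_form_def pmult_add_left pmult_sum_left
    by (intro has_normal_form_add has_normal_form_sum has_normal_form_down_arrow[OF snoc.prems(1) a]
        has_normal_form_up_arrow[OF snoc.prems(1) a])
  ultimately show ?case
    by (rule has_normal_form_hcong)
qed

lemma has_normal_form_corner:
  assumes a: "a \<in> corner n i k"
  shows "has_normal_form i a"
proof -
  have "has_normal_form i (\<Sum>p | a p \<noteq> 0. psmult (a p) (pth p))"
  proof (intro has_normal_form_sum has_normal_form_psmult)
    fix p assume "p \<in> {p. a p \<noteq> 0}"
    with corner_support[OF a] have "p = (i, snd p)" "i < n" "valid_from n i (snd p)"
      by (auto simp: prod_eq_iff)
    then show "has_normal_form i (pth p)"
      using has_normal_form_pth by metis
  qed
  then show ?thesis
    by (simp flip: fin_supp_expand[OF corner_fin_supp[OF a]])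
qed

lemma Phi_normal_form:
  assumes v: "v < n"
  shows "\<Phi> (normal_form n v F G K) v M = (\<Sum>m<K. if int m = M then F m else 0)
    + (\<Sum>m<K. if - int m = M then G m * \<phi> (up_path n v m) else 0)"
  unfolding normal_form_def
  by (simp add: Phi_add Phi_sum fin_supp_sum fin_supp_pmult fin_supp_poly_at Phi_poly_at_pmult_pth[OF v] cong: if_cong)

lemma word_poly_nonzero: "valid_from n v w \<Longrightarrow> \<phi> w \<noteq> 0"
proof (induction w arbitrary: v)
  case (Cons a w)
  show ?case
  proof (cases a)
    case (U j)
    with Cons have "j < n" "\<phi> w \<noteq> 0" by auto
    then have "\<sigma>' j (\<phi> w) \<noteq> 0"
      by (metis sigma_0 sigma_sigma_inv beta_nonzero)
    with U show ?thesis by simp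
  next
    case (D j)
    with Cons have "j < n" "\<phi> w \<noteq> 0" by auto
    then have "\<sigma> j (\<phi> w) \<noteq> 0"
      by (metis sigma_inv_0 sigma_inv_sigma beta_nonzero)
    with D show ?thesis by simp
  qed
qed simp

lemma normal_form_eq_0:
  assumes v: "v < n" and Phi0: "\<And>M. \<Phi> (normal_form n v F G K) v M = 0"
  shows "normal_form n v F G K = 0"
proof (cases "K = 0")
  case True
  then show ?thesis by (simp add: normal_form_def)
next
  case False
  have F: "F m = 0" if "0 < m" "m < K" for m
    using Phi0[of "int m"] that by (simp add: Phi_normal_form[OF v] sum.delta')
  have G: "G m = 0" if "0 < m" "m < K" for m
    using Phi0[of "- int m"] that word_poly_nonzero[OF conjunct1[OF valid_up_path[OF v]]]
    by (simp add: Phi_normal_form[OF v] sum.delta')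
  have "(\<Sum>m<K. pmult n (poly_at n v (F m)) (pth (v, down_path n v m))) = pmult n (poly_at n v (F 0)) (pth (v, []))"
    "(\<Sum>m<K. pmult n (poly_at n v (G m)) (pth (v, up_path n v m))) = pmult n (poly_at n v (G 0)) (pth (v, []))"
    by (subst sum.mono_neutral_right[of "{..<K}" "{0}"]; use False F G in force)+
  then have "normal_form n v F G K = pmult n (poly_at n v (F 0)) (pth (v, [])) + pmult n (poly_at n v (G 0)) (pth (v, []))"
    unfolding normal_form_def by simp
  also have "\<dots> = poly_at n v (F 0 + G 0)"
    by (simp add: poly_at_pmult_pth_Nil[OF v] poly_at_add)
  also have "F 0 + G 0 = 0"
    using Phi0[of 0] False by (simp add: Phi_normal_form[OF v] sum.delta')
  finally show ?thesis by (simp add: lambda_zero_eq_zero)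
qed

lemma Phi_corner_nonzero:
  assumes a: "a \<in> corner n i k" and i: "i < n" and a_notin: "a \<notin> relideal n \<alpha> \<beta> \<gamma>"
  shows "\<exists>M. \<Phi> a i M \<noteq> 0"
proof (rule ccontr)
  assume "\<not> ?thesis"
  then have Phi_a: "\<Phi> a i M = 0" for M by simp
  obtain F G K where nf: "a \<approx> normal_form n i F G K"
    using has_normal_form_corner[OF a] has_normal_form_def by blast
  have "\<Phi> (normal_form n i F G K) i M = 0" for M
  proof -
    have "\<Phi> (a - normal_form n i F G K) i M = 0"
      using nf Phi_relideal by (simp add: hcong_def)
    then show ?thesis
      using Phi_a Phi_diff[OF corner_fin_supp[OF a] fin_supp_normal_form] by simp
  qed
  then have "normal_form n i F G K = 0"
    by (rule normal_form_eq_0[OF i])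
  with nf a_notin show False
    by (simp add: hcong_def)
qed

theorem piecewise_domain: "piecewise_domain_H n \<alpha> \<beta> \<gamma>"
  unfolding piecewise_domain_H_def
proof (intro allI impI ballI)
  fix i k j a b
  assume i: "i < n" and k: "k < n" and a: "a \<in> corner n i k" and b: "b \<in> corner n k j"
    and ab: "pmult n a b \<in> relideal n \<alpha> \<beta> \<gamma>"
  show "a \<in> relideal n \<alpha> \<beta> \<gamma> \<or> b \<in> relideal n \<alpha> \<beta> \<gamma>"
  proof (rule ccontr)
    assume "\<not> ?thesis"
    then obtain ma mb where "\<Phi> a i ma \<noteq> 0" "\<Phi> b k mb \<noteq> 0"
      using Phi_corner_nonzero[OF a i] Phi_corner_nonzero[OF b k] by blast
    then obtain M where "\<Phi> (pmult n a b) i M \<noteq> 0"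
      using Phi_pmult_nonzero[OF a b] by blast
    with Phi_relideal[OF ab] show False by simp
  qed
qed

end

theorem corollary2p4:
  fixes n :: nat and \<alpha> \<beta> \<gamma> :: "nat \<Rightarrow> 'k::field_char_0"
  assumes alg_closed: "\<forall>p :: 'k poly. degree p \<noteq> 0 \<longrightarrow> (\<exists>x. poly p x = 0)"
    and n: "n \<ge> 1"
    and beta: "\<forall>i<n. \<beta> i \<noteq> 0"
  shows "piecewise_domain_H n \<alpha> \<beta> \<gamma>"
proof -
  \<comment> \<open>only \<open>\<beta>\<^sub>i \<noteq> 0\<close> is used: the argument works over any field\<close>
  interpret H_algebra n \<alpha> \<beta> \<gamma>
    using n beta by unfold_locales auto
  show ?thesis
    by (rule piecewise_domain)
qed

end
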